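(* Let $N$ be a positive integer and let $\mathscr{W}(x,y)$ be a homogeneous rational function of degree $N$ which cannot be written as $\mathscr{V}^{m}(x,y)$ for a homogeneous rational function $\mathscr{V}$ and an integer $m\geq 2$. Let $\mathcal{U}(x,y)$ be the solution of the algebraic equation $$\mathscr{W}\Big(\mathcal{U}(x,y),\frac{y}{y+1}\Big)=\mathscr{W}(x,y)$$ satisfying the boundary condition $\lim_{z\to 0}\frac{\mathcal{U}(xz,yz)}{z}=x$. Then $\mathcal{U}(x,y)\bullet\frac{y}{y+1}$ is an algebraic projective flow of level $N$, with vector field $$\frac{Ny\mathscr{W}}{\mathscr{W}_{x}}-xy\ \bullet\ -y^{2}.$$
   Context: Notation: $a\bullet b$ denotes the pair $(a,b)$, $\mathbf{x}=(x,y)$. A (two-dimensional) projective flow is a pair $\phi(x,y)=u(x,y)\bullet v(x,y)$ satisfying $(1-z)\phi(\mathbf{x})=\phi\big(\phi(\mathbf{x}z)\frac{1-z}{z}\big)$ and $\lim_{z\to0}u(xz,yz)/z=x$, $\lim_{z\to0}v(xz,yz)/z=y$ (equivalently $\phi^{w}\circ\phi^{z}=\phi^{z+w}$ for small $z,w$, where $\phi^{z}(\mathbf x)=z^{-1}\phi(z\mathbf x)$, with branches chosen compatibly with the boundary conditions). Its vector field is $\varpi\bullet\varrho$ with $\varpi=\frac{d}{dz}\frac{u(xz,yz)}{z}|_{z=0}$, $\varrho=\frac{d}{dz}\frac{v(xz,yz)}{z}|_{z=0}$. The flow is algebraic if $u,v$ are algebraic functions. Level: if $x\varrho-y\varpi\neq0$,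 let $\mathscr{W}_1$ be a nonzero $1$-homogeneous solution of $\mathscr{W}_1\varrho+(\mathscr{W}_1)_{x}(y\varpi-x\varrho)=0$ (so the orbits are $\mathscr{W}_1=\mathrm{const}$); the flow is abelian of level $N$ if $N$ is the smallest positive integer such that $\mathscr{W}_1^{N}$ is rational. *)

theory Defs
  imports "HOL-Analysis.Analysis" "HOL-Computational_Algebra.Polynomial"
begin

text \<open>A bivariate polynomial is an element of complex poly poly: the outer
  variable is y, the coefficients are polynomials in x.\<close>

definition eval2 :: "complex poly poly \<Rightarrow> complex \<Rightarrow> complex \<Rightarrow> complex" where
  "eval2 p x y = poly (map_poly (\<lambda>c. poly c x) p) y"

definition eval3 :: "complex poly poly poly \<Rightarrow> complex \<Rightarrow> complex \<Rightarrow> complex \<Rightarrow> complex" where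
  "eval3 R x y t = poly (map_poly (\<lambda>c. eval2 c x y) R) t"

definition dx2 :: "complex poly poly \<Rightarrow> complex poly poly" where
  "dx2 p = map_poly pderiv p"

definition hom_poly2 :: "nat \<Rightarrow> complex poly poly \<Rightarrow> bool" where
  "hom_poly2 d p \<longleftrightarrow> (\<forall>i j. coeff (coeff p j) i \<noteq> 0 \<longrightarrow> i + j = d)"

definition hom_rat_fun :: "int \<Rightarrow> complex poly poly \<Rightarrow> complex poly poly \<Rightarrow> bool" where
  "hom_rat_fun N P Q \<longleftrightarrow> Q \<noteq> 0 \<and>
     (\<exists>a b. hom_poly2 a P \<and> hom_poly2 b Q \<and> int a - int b = N)"

definition is_hom_power :: "complex poly poly \<Rightarrow> complex poly poly \<Rightarrow> bool" where
  "is_hom_power P Q \<longleftrightarrow>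
     (\<exists>A B (m::nat) d. m \<ge> 2 \<and> hom_rat_fun d A B \<and> P * B ^ m = A ^ m * Q)"

definition ratW :: "complex poly poly \<Rightarrow> complex poly poly \<Rightarrow> complex \<Rightarrow> complex \<Rightarrow> complex" where
  "ratW P Q x y = eval2 P x y / eval2 Q x y"

definition ratWx :: "complex poly poly \<Rightarrow> complex poly poly \<Rightarrow> complex \<Rightarrow> complex \<Rightarrow> complex" where
  "ratWx P Q x y =
     (eval2 (dx2 P) x y * eval2 Q x y - eval2 P x y * eval2 (dx2 Q) x y) / (eval2 Q x y)^2"

definition rational_on :: "(complex \<times> complex) set \<Rightarrow> (complex \<Rightarrow> complex \<Rightarrow> complex) \<Rightarrow> bool" where
  "rational_on D f \<longleftrightarrow> (\<exists>A B. B \<noteq> 0 \<and>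
     (\<forall>(x,y)\<in>D. eval2 B x y \<noteq> 0 \<longrightarrow> f x y = eval2 A x y / eval2 B x y))"

definition algebraic_on :: "(complex \<times> complex) set \<Rightarrow> (complex \<Rightarrow> complex \<Rightarrow> complex) \<Rightarrow> bool" where
  "algebraic_on D f \<longleftrightarrow> (\<exists>R. R \<noteq> 0 \<and> (\<forall>(x,y)\<in>D. eval3 R x y (f x y) = 0))"

definition fpow :: "(complex \<Rightarrow> complex \<Rightarrow> complex) \<Rightarrow> (complex \<Rightarrow> complex \<Rightarrow> complex)
    \<Rightarrow> complex \<Rightarrow> complex \<times> complex \<Rightarrow> complex \<times> complex" where
  "fpow u v z p = (u (z * fst p) (z * snd p) / z, v (z * fst p) (z * snd p) / z)"

definition projective_flow_on ::
    "(complex \<times> complex) set \<Rightarrow> (complex \<Rightarrow> complex \<Rightarrow> complex) \<Rightarrow> (complex \<Rightarrow> complex \<Rightarrow> complex) \<Rightarrow> bool" where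
  "projective_flow_on D u v \<longleftrightarrow> open D \<and> D \<noteq> {} \<and>
     (\<forall>(x,y)\<in>D.
        ((\<lambda>z. u (z * x) (z * y) / z) \<longlongrightarrow> x) (at 0) \<and>
        ((\<lambda>z. v (z * x) (z * y) / z) \<longlongrightarrow> y) (at 0) \<and>
        eventually (\<lambda>(z, w). z \<noteq> 0 \<and> w \<noteq> 0 \<and> z + w \<noteq> 0 \<longrightarrow>
            fpow u v w (fpow u v z (x, y)) = fpow u v (z + w) (x, y)) (at (0, 0)))"

text \<open>Vector field: derivative at z = 0 of u(xz,yz)/z (extended by x at z = 0),
  i.e. the limit of the difference quotient.\<close>
definition vf1 :: "(complex \<Rightarrow> complex \<Rightarrow> complex) \<Rightarrow> complex \<Rightarrow> complex \<Rightarrow> complex" where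
  "vf1 u x y = Lim (at 0) (\<lambda>z. (u (z * x) (z * y) / z - x) / z)"

definition vf2 :: "(complex \<Rightarrow> complex \<Rightarrow> complex) \<Rightarrow> complex \<Rightarrow> complex \<Rightarrow> complex" where
  "vf2 v x y = Lim (at 0) (\<lambda>z. (v (z * x) (z * y) / z - y) / z)"

definition level_solution ::
    "(complex \<times> complex) set \<Rightarrow> (complex \<Rightarrow> complex \<Rightarrow> complex) \<Rightarrow> (complex \<Rightarrow> complex \<Rightarrow> complex)
      \<Rightarrow> (complex \<Rightarrow> complex \<Rightarrow> complex) \<Rightarrow> bool" where
  "level_solution D vp vr W1 \<longleftrightarrow>
     (\<forall>(x,y)\<in>D. W1 x y \<noteq> 0 \<and>
        (\<exists>d. ((\<lambda>t. W1 t y) has_field_derivative d) (at x) \<and>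
             W1 x y * vr x y + d * (y * vp x y - x * vr x y) = 0) \<and>
        (\<forall>\<^sub>F t in nhds 1. W1 (t * x) (t * y) = t * W1 x y))"

definition level_on ::
    "(complex \<times> complex) set \<Rightarrow> (complex \<Rightarrow> complex \<Rightarrow> complex) \<Rightarrow> (complex \<Rightarrow> complex \<Rightarrow> complex) \<Rightarrow> nat \<Rightarrow> bool" where
  "level_on D u v N \<longleftrightarrow> N > 0 \<and>
     (\<forall>(x,y)\<in>D. x * vf2 v x y - y * vf1 u x y \<noteq> 0) \<and>
     (\<exists>W1. level_solution D (vf1 u) (vf2 v) W1 \<and>
        rational_on D (\<lambda>x y. W1 x y ^ N) \<and>
        (\<forall>M. 0 < M \<and> M < N \<longrightarrow> \<not> rational_on D (\<lambda>x y. W1 x y ^ M)))"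

end

theory Submission
  imports Defs "HOL-Complex_Analysis.Conformal_Mappings"
begin

text \<open>
  With second component \<open>y/(y + 1)\<close> the time-\<open>t\<close> map is
  \<open>\<phi>\<^sup>t(x, y) = (U(tx, ty)/t, y/(1 + ty))\<close>, and the defining equation of \<open>U\<close> together with
  the homogeneity of \<open>W = P/Q\<close> says exactly that \<open>W\<close> is constant along it. Scaling the second
  coordinate back to \<open>y\<close>, the first coordinates of \<open>\<phi>\<^sup>w(\<phi>\<^sup>z(x, y))\<close> and
  \<open>\<phi>\<^sup>z\<^sup>+\<^sup>w(x, y)\<close> become two roots of \<open>W(\<cdot>, y) = (1 + (z + w) y)\<^sup>N W(x, y)\<close>; near a point
  where \<open>W\<^sub>x \<noteq> 0\<close> the map \<open>W(\<cdot>, y)\<close> is injective, and a connectedness argument in \<open>w\<close>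
  keeps both roots in the region of injectivity, which gives the flow property. Implicit
  differentiation of \<open>W((1 + ty) U(tx, ty)/t, y) = (1 + ty)\<^sup>N W(x, y)\<close> at \<open>t = 0\<close> gives the
  vector field.

  The orbits are the level sets of \<open>W\<close>, so a holomorphic branch \<open>W\<^sub>1\<close> of \<open>W\<^sup>1\<^sup>/\<^sup>N\<close> solves
  the level equation and \<open>W\<^sub>1\<^sup>N = W\<close> is rational. If \<open>W\<^sub>1\<^sup>M\<close> were rational for some
  \<open>0 < M < N\<close>, then by Bezout so would be \<open>W\<^sub>1\<^sup>g\<close> with \<open>g = gcd M N\<close>, and rehomogenizing
  it along a line would write \<open>W\<close> as the \<open>(N/g)\<close>-th power of a homogeneous rational function.
  Finally \<open>U\<close> is algebraic, being a root in \<open>t\<close> of the polynomial obtained by clearing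
  denominators in \<open>W((y + 1) t, y) = (y + 1)\<^sup>N W(x, y)\<close>.
\<close>

section \<open>Evaluating bivariate and trivariate polynomials\<close>

lemma eval2_0 [simp]: "eval2 0 x y = 0"
  by (simp add: eval2_def)

lemma eval3_0 [simp]: "eval3 0 x y t = 0"
  by (simp add: eval3_def)

lemma eval2_pCons [simp]: "eval2 (pCons a p) x y = poly a x + y * eval2 p x y"
  by (simp add: eval2_def map_poly_pCons)

lemma eval2_altdef: "eval2 p x y = poly (poly p [:y:]) x"
  by (induction p) simp_all

lemma eval2_add [simp]: "eval2 (p + q) x y = eval2 p x y + eval2 q x y"
  and eval2_diff [simp]: "eval2 (p - q) x y = eval2 p x y - eval2 q x y"
  and eval2_mult [simp]: "eval2 (p * q) x y = eval2 p x y * eval2 q x y"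
  and eval2_power [simp]: "eval2 (p ^ n) x y = eval2 p x y ^ n"
  and eval2_smult [simp]: "eval2 (smult a p) x y = poly a x * eval2 p x y"
  and eval2_1 [simp]: "eval2 1 x y = 1"
  and eval2_monom [simp]: "eval2 (monom (monom c i) j) x y = c * x ^ i * y ^ j"
  by (simp_all add: eval2_altdef poly_monom)

lemma eval2_sum: "eval2 (sum f A) x y = (\<Sum>a\<in>A. eval2 (f a) x y)"
  by (induction A rule: infinite_finite_induct) simp_all

lemma eval3_pCons [simp]: "eval3 (pCons c R) x y t = eval2 c x y + t * eval3 R x y t"
  by (simp add: eval3_def map_poly_pCons)

lemma eval3_altdef: "eval3 R x y t = eval2 (poly R [:[:t:]:]) x y"
  by (induction R) simp_all

lemma eval3_add [simp]: "eval3 (R + S) x y t = eval3 R x y t + eval3 S x y t"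
  and eval3_diff [simp]: "eval3 (R - S) x y t = eval3 R x y t - eval3 S x y t"
  and eval3_mult [simp]: "eval3 (R * S) x y t = eval3 R x y t * eval3 S x y t"
  and eval3_power [simp]: "eval3 (R ^ n) x y t = eval3 R x y t ^ n"
  and eval3_smult [simp]: "eval3 (smult a R) x y t = eval2 a x y * eval3 R x y t"
  and eval3_1 [simp]: "eval3 1 x y t = 1"
  by (simp_all add: eval3_altdef)

lemma eval3_sum: "eval3 (sum f A) x y t = (\<Sum>a\<in>A. eval3 (f a) x y t)"
  by (induction A rule: infinite_finite_induct) simp_all

lemma tendsto_eval2 [tendsto_intros]:
  "(f \<longlongrightarrow> a) F \<Longrightarrow> (g \<longlongrightarrow> b) F \<Longrightarrow> ((\<lambda>z. eval2 p (f z) (g z)) \<longlongrightarrow> eval2 p a b) F"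
  by (induction p) (auto intro!: tendsto_intros)

lemma isCont_eval2 [continuous_intros]:
  "isCont f z \<Longrightarrow> isCont g z \<Longrightarrow> isCont (\<lambda>z. eval2 p (f z) (g z)) z"
  unfolding isCont_def by (rule tendsto_eval2)

lemma continuous_on_eval2 [continuous_intros]:
  "continuous_on A f \<Longrightarrow> continuous_on A g \<Longrightarrow> continuous_on A (\<lambda>z. eval2 p (f z) (g z))"
  by (induction p) (auto intro!: continuous_intros)

lemma dx2_0 [simp]: "dx2 0 = 0"
  by (simp add: dx2_def)

lemma dx2_pCons [simp]: "dx2 (pCons a p) = pCons (pderiv a) (dx2 p)"
  by (simp add: dx2_def map_poly_pCons)

lemma eval2_has_field_derivative:
  "((\<lambda>s. eval2 p s y) has_field_derivative eval2 (dx2 p) x y) (at x)"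
  by (induction p) (auto intro!: derivative_eq_intros simp: algebra_simps)

lemma poly_eq_sum_upto:
  fixes p :: "'a::comm_semiring_1 poly"
  assumes "degree p \<le> n"
  shows "poly p x = (\<Sum>i\<le>n. coeff p i * x ^ i)"
proof -
  have "(\<Sum>i\<le>n. coeff p i * x ^ i) = (\<Sum>i\<le>degree p. coeff p i * x ^ i)"
    using assms by (intro sum.mono_neutral_right) (auto simp: coeff_eq_0)
  then show ?thesis
    using poly_altdef[of p x] by simp
qed

definition degree_x :: "complex poly poly \<Rightarrow> nat" where
  "degree_x p = Max ((\<lambda>j. degree (coeff p j)) ` {..degree p})"

lemma degree_coeff_le_degree_x: "degree (coeff p j) \<le> degree_x p"
  by (cases "j \<le> degree p") (auto simp: degree_x_def coeff_eq_0)

lemma eval2_double_sum: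
  "eval2 p x y = (\<Sum>j\<le>degree p. \<Sum>i\<le>degree_x p. coeff (coeff p j) i * x ^ i * y ^ j)"
proof -
  have "eval2 p x y = (\<Sum>j\<le>degree p. poly (coeff p j) x * y ^ j)"
    unfolding eval2_def
    by (subst poly_eq_sum_upto[of _ "degree p"]) (auto simp: map_poly_degree_leq coeff_map_poly)
  then show ?thesis
    by (simp add: poly_eq_sum_upto[OF degree_coeff_le_degree_x] sum_distrib_right)
qed

definition subst_xy :: "complex poly poly \<Rightarrow> complex poly poly poly \<Rightarrow> complex poly poly poly
    \<Rightarrow> complex poly poly poly" where
  "subst_xy p A B = (\<Sum>j\<le>degree p. \<Sum>i\<le>degree_x p. [:[:[:coeff (coeff p j) i:]:]:] * A ^ i * B ^ j)"

lemma eval3_subst_xy: "eval3 (subst_xy p A B) x y t = eval2 p (eval3 A x y t) (eval3 B x y t)"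
  unfolding subst_xy_def eval2_double_sum by (simp add: eval3_sum mult.assoc)

lemma open_nonempty_not_subset_finite:
  fixes A :: "complex set"
  assumes "open A" "A \<noteq> {}" "finite F"
  obtains a where "a \<in> A" "a \<notin> F"
proof -
  have "\<not> A \<subseteq> F"
    using assms finite_imp_not_open[of A] finite_subset[of A F] by auto
  then show thesis
    using that by blast
qed

lemma eval2_nonzero_in_open:
  assumes "p \<noteq> 0" "open D" "D \<noteq> {}"
  obtains x y where "(x, y) \<in> D" "eval2 p x y \<noteq> 0"
proof -
  obtain A B where AB: "open A" "open B" "A \<noteq> {}" "B \<noteq> {}" "A \<times> B \<subseteq> D"
  proof -
    obtain z where "z \<in> D"
      using assms(3) by blast
    then obtain A B where "open A" "open B" "z \<in> A \<times> B" "A \<times> B \<subseteq> D"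
      using open_prod_elim[OF assms(2)] by blast
    then show thesis
      using that by blast
  qed
  have "lead_coeff p \<noteq> 0"
    using assms(1) by simp
  then obtain x where x: "x \<in> A" "poly (lead_coeff p) x \<noteq> 0"
    using open_nonempty_not_subset_finite[OF AB(1,3) poly_roots_finite] by blast
  define q where "q = map_poly (\<lambda>c. poly c x) p"
  have "coeff q (degree p) \<noteq> 0"
    using x by (simp add: q_def coeff_map_poly)
  then have "q \<noteq> 0"
    by auto
  then obtain y where y: "y \<in> B" "poly q y \<noteq> 0"
    using open_nonempty_not_subset_finite[OF AB(2,4) poly_roots_finite] by blast
  show thesis
    using that[of x y] x y AB(5) by (auto simp: eval2_def q_def)
qed

lemma eval2_eq_0_on_open_imp_eq_0:
  assumes "open D" "D \<noteq> {}" "\<forall>(x, y)\<in>D. eval2 p x y = 0"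
  shows "p = 0"
proof (rule ccontr)
  assume "p \<noteq> 0"
  then obtain x y where "(x, y) \<in> D" "eval2 p x y \<noteq> 0"
    using eval2_nonzero_in_open assms(1,2) by blast
  then show False
    using assms(3) by auto
qed

section \<open>Homogeneity\<close>

lemma eval2_scale:
  assumes "hom_poly2 d p"
  shows "eval2 p (t * x) (t * y) = t ^ d * eval2 p x y"
proof -
  have "coeff (coeff p j) i * (t * x) ^ i * (t * y) ^ j = t ^ d * (coeff (coeff p j) i * x ^ i * y ^ j)"
    for i j
  proof (cases "coeff (coeff p j) i = 0")
    case False
    then have "d = i + j"
      using assms by (simp add: hom_poly2_def)
    then show ?thesis
      by (simp add: power_mult_distrib power_add)
  qed simp
  then show ?thesis
    by (simp only: eval2_double_sum sum_distrib_left)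
qed

lemma eval2_scale_eq_0_iff:
  "hom_poly2 d p \<Longrightarrow> t \<noteq> 0 \<Longrightarrow> eval2 p (t * x) (t * y) = 0 \<longleftrightarrow> eval2 p x y = 0"
  by (simp add: eval2_scale)

lemma hom_rat_fun_degrees:
  assumes "hom_rat_fun (int N) P Q"
  obtains a b where "hom_poly2 a P" "hom_poly2 b Q" "a = b + N"
proof -
  obtain a b where ab: "hom_poly2 a P" "hom_poly2 b Q" "int a - int b = int N"
    using assms unfolding hom_rat_fun_def by auto
  then have "a = b + N"
    by linarith
  with ab show thesis
    using that by blast
qed

lemma ratW_scale:
  assumes "hom_rat_fun (int N) P Q" "t \<noteq> 0"
  shows "ratW P Q (t * x) (t * y) = t ^ N * ratW P Q x y"
proof -
  obtain a b where "hom_poly2 a P" "hom_poly2 b Q" "a = b + N"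
    using hom_rat_fun_degrees[OF assms(1)] .
  then have "ratW P Q (t * x) (t * y) = t ^ b * t ^ N * eval2 P x y / (t ^ b * eval2 Q x y)"
    by (simp add: ratW_def eval2_scale[of a P] eval2_scale[of b Q] power_add)
  then show ?thesis
    using assms(2) by (simp add: ratW_def)
qed

lemma hom_poly2_add: "hom_poly2 d p \<Longrightarrow> hom_poly2 d q \<Longrightarrow> hom_poly2 d (p + q)"
  unfolding hom_poly2_def by (metis add.right_neutral add.left_neutral coeff_add)

lemma hom_poly2_sum: "(\<And>i. i \<in> A \<Longrightarrow> hom_poly2 d (f i)) \<Longrightarrow> hom_poly2 d (sum f A)"
  by (induction A rule: infinite_finite_induct) (auto simp: hom_poly2_add, simp_all add: hom_poly2_def)

lemma hom_poly2_monom: "hom_poly2 (i + j) (monom (monom c i) j)"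
  by (auto simp: hom_poly2_def coeff_monom split: if_splits)

definition homogenize :: "complex \<Rightarrow> nat \<Rightarrow> complex poly \<Rightarrow> complex poly poly" where
  "homogenize y0 n f = (\<Sum>i\<le>n. monom (monom (coeff f i / y0 ^ (n - i)) i) (n - i))"

lemma hom_poly2_homogenize: "hom_poly2 n (homogenize y0 n f)"
  unfolding homogenize_def by (intro hom_poly2_sum) (metis atMost_iff hom_poly2_monom le_add_diff_inverse)

lemma eval2_homogenize:
  assumes "degree f \<le> n" "y \<noteq> 0" "y0 \<noteq> 0"
  shows "eval2 (homogenize y0 n f) x y = (y / y0) ^ n * poly f (x * y0 / y)"
proof -
  have "coeff f i / y0 ^ (n - i) * x ^ i * y ^ (n - i) = (y / y0) ^ n * (coeff f i * (x * y0 / y) ^ i)"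
    if "i \<le> n" for i
  proof -
    have xr: "(y / y0) * (x * y0 / y) = x"
      using assms(2,3) by simp
    have n: "n = i + (n - i)"
      using that by simp
    have "(y / y0) ^ n * (coeff f i * (x * y0 / y) ^ i) =
        (y / y0) ^ i * (y / y0) ^ (n - i) * (coeff f i * (x * y0 / y) ^ i)"
      by (subst n) (simp only: power_add)
    also have "\<dots> = coeff f i * ((y / y0) * (x * y0 / y)) ^ i * (y / y0) ^ (n - i)"
      by (simp only: power_mult_distrib mult_ac)
    also have "\<dots> = coeff f i / y0 ^ (n - i) * x ^ i * y ^ (n - i)"
      unfolding xr by (simp add: power_divide)
    finally show ?thesis ..
  qed
  then show ?thesis
    by (simp add: homogenize_def eval2_sum sum_distrib_left poly_eq_sum_upto[OF assms(1)])
qed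

lemma eval2_hom_on_line:
  assumes "hom_poly2 d p" "y \<noteq> 0" "y0 \<noteq> 0"
  shows "eval2 p x y = (y / y0) ^ d * eval2 p (x * y0 / y) y0"
  using eval2_scale[OF assms(1), of "y / y0" "x * y0 / y" y0] assms(2,3) by simp

text \<open>Restricting \<open>A\<close> and \<open>B\<close> to a line \<open>y = y\<^sub>0\<close> and rehomogenizing them keeps the identity
  \<open>P B\<^sup>m = A\<^sup>m Q\<close>, because \<open>P\<close> and \<open>Q\<close> are already homogeneous.\<close>
lemma is_hom_powerI:
  assumes hP: "hom_poly2 a P" and hQ: "hom_poly2 b Q"
    and deg: "a = b + m * g" and m: "m \<ge> 2" and B0: "B \<noteq> 0" and eq: "P * B ^ m = A ^ m * Q"
  shows "is_hom_power P Q"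
proof -
  have "B * [:0, 1:] \<noteq> 0"
    using B0 by simp
  then obtain x' y0 where "eval2 (B * [:0, 1:]) x' y0 \<noteq> 0"
    using eval2_nonzero_in_open[of _ UNIV] by blast
  then have y0: "y0 \<noteq> 0" and Bx': "eval2 B x' y0 \<noteq> 0"
    by auto
  define u where "u F = poly F [:y0:]" for F :: "complex poly poly"
  have poly_u: "poly (u F) x = eval2 F x y0" for F x
    by (simp add: u_def eval2_altdef)
  define nb where "nb = max (degree (u B)) (degree (u A))"
  define na where "na = nb + g"
  define A' where "A' = homogenize y0 na (u A)"
  define B' where "B' = homogenize y0 nb (u B)"
  have dA: "degree (u A) \<le> na" and dB: "degree (u B) \<le> nb"
    by (auto simp: na_def nb_def)
  have "eval2 B' x' y0 \<noteq> 0"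
    using eval2_homogenize[OF dB y0 y0, of x'] Bx' y0 by (simp add: B'_def poly_u)
  then have "hom_rat_fun (int g) A' B'"
    unfolding hom_rat_fun_def A'_def B'_def na_def by (auto intro!: hom_poly2_homogenize)
  moreover have "P * B' ^ m = A' ^ m * Q"
  proof -
    have "eval2 (P * B' ^ m) x y = eval2 (A' ^ m * Q) x y" if y: "y \<noteq> 0" for x y
    proof -
      define \<tau> where "\<tau> = y / y0"
      define r where "r = x * y0 / y"
      have hom: "eval2 P x y = \<tau> ^ a * poly (u P) r" "eval2 Q x y = \<tau> ^ b * poly (u Q) r"
          "eval2 A' x y = \<tau> ^ na * poly (u A) r" "eval2 B' x y = \<tau> ^ nb * poly (u B) r"
        using eval2_hom_on_line[OF hP y y0, of x] eval2_hom_on_line[OF hQ y y0, of x]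
          eval2_homogenize[OF dA y y0, of x] eval2_homogenize[OF dB y y0, of x]
        by (simp_all add: A'_def B'_def poly_u \<tau>_def r_def)
      have "a + nb * m = b + na * m"
        by (simp add: deg na_def algebra_simps)
      then have "\<tau> ^ a * (\<tau> ^ nb) ^ m = \<tau> ^ b * (\<tau> ^ na) ^ m"
        by (simp only: power_mult[symmetric] power_add[symmetric])
      moreover have "poly (u P) r * poly (u B) r ^ m = poly (u A) r ^ m * poly (u Q) r"
        using arg_cong[OF eq, of "\<lambda>F. eval2 F r y0"] by (simp add: poly_u)
      ultimately show ?thesis
        unfolding eval2_mult eval2_power hom power_mult_distrib
        by (metis (no_types, lifting) mult.assoc mult.left_commute)
    qed
    then have "P * B' ^ m - A' ^ m * Q = 0"
      by (intro eval2_eq_0_on_open_imp_eq_0[of "{p. snd p \<noteq> 0}"])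
        (auto intro!: open_Collect_neq continuous_intros exI[of _ "(0, 1)"])
    then show ?thesis
      by simp
  qed
  ultimately show ?thesis
    unfolding is_hom_power_def using m by blast
qed

section \<open>Rational functions and proper powers\<close>

lemma rational_on_cong:
  assumes "rational_on D f" "\<And>x y. (x, y) \<in> D \<Longrightarrow> f x y = g x y"
  shows "rational_on D g"
proof -
  obtain A B where AB: "B \<noteq> 0" "\<forall>(x, y)\<in>D. eval2 B x y \<noteq> 0 \<longrightarrow> f x y = eval2 A x y / eval2 B x y"
    using assms(1) unfolding rational_on_def by blast
  show ?thesis
    unfolding rational_on_def by (rule exI[of _ A], rule exI[of _ B]) (use AB assms(2) in auto)
qed

lemma rational_on_mult:
  assumes "rational_on D f" "rational_on D g"
  shows "rational_on D (\<lambda>x y. f x y * g x y)"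
proof -
  obtain A1 B1 where 1: "B1 \<noteq> 0" "\<forall>(x, y)\<in>D. eval2 B1 x y \<noteq> 0 \<longrightarrow> f x y = eval2 A1 x y / eval2 B1 x y"
    using assms(1) unfolding rational_on_def by blast
  obtain A2 B2 where 2: "B2 \<noteq> 0" "\<forall>(x, y)\<in>D. eval2 B2 x y \<noteq> 0 \<longrightarrow> g x y = eval2 A2 x y / eval2 B2 x y"
    using assms(2) unfolding rational_on_def by blast
  show ?thesis
    unfolding rational_on_def
  proof (rule exI[of _ "A1 * A2"], rule exI[of _ "B1 * B2"], intro conjI)
    show "B1 * B2 \<noteq> 0"
      using 1(1) 2(1) by simp
    show "\<forall>(x, y)\<in>D. eval2 (B1 * B2) x y \<noteq> 0 \<longrightarrow>
        f x y * g x y = eval2 (A1 * A2) x y / eval2 (B1 * B2) x y"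
    proof clarify
      fix x y
      assume xy: "(x, y) \<in> D" and nz: "eval2 (B1 * B2) x y \<noteq> 0"
      have "f x y = eval2 A1 x y / eval2 B1 x y" "g x y = eval2 A2 x y / eval2 B2 x y"
        using 1(2) 2(2) xy nz by auto
      then show "f x y * g x y = eval2 (A1 * A2) x y / eval2 (B1 * B2) x y"
        by simp
    qed
  qed
qed

lemma rational_on_power: "rational_on D f \<Longrightarrow> rational_on D (\<lambda>x y. f x y ^ n)"
proof (induction n)
  case 0
  show ?case
    unfolding rational_on_def by (intro exI[of _ 1]) auto
next
  case (Suc n)
  then show ?case
    using rational_on_mult[of D f] by simp
qed

lemma rational_on_divide:
  assumes D: "open D" "D \<noteq> {}" and f: "rational_on D f" and g: "rational_on D g"
    and g0: "\<And>x y. (x, y) \<in> D \<Longrightarrow> g x y \<noteq> 0"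
  shows "rational_on D (\<lambda>x y. f x y / g x y)"
proof -
  obtain A1 B1 where 1: "B1 \<noteq> 0" "\<forall>(x, y)\<in>D. eval2 B1 x y \<noteq> 0 \<longrightarrow> f x y = eval2 A1 x y / eval2 B1 x y"
    using f unfolding rational_on_def by blast
  obtain A2 B2 where 2: "B2 \<noteq> 0" "\<forall>(x, y)\<in>D. eval2 B2 x y \<noteq> 0 \<longrightarrow> g x y = eval2 A2 x y / eval2 B2 x y"
    using g unfolding rational_on_def by blast
  have "A2 \<noteq> 0"
  proof
    assume "A2 = 0"
    obtain x y where "(x, y) \<in> D" "eval2 B2 x y \<noteq> 0"
      using eval2_nonzero_in_open[OF 2(1) D] .
    then show False
      using 2(2) g0 \<open>A2 = 0\<close> by auto
  qed
  \<comment> \<open>the redundant factor \<open>B\<^sub>2\<close> makes the denominator vanish where \<open>g\<close> has no representation\<close>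
  show ?thesis
    unfolding rational_on_def
  proof (rule exI[of _ "A1 * B2 * B2"], rule exI[of _ "B1 * A2 * B2"], intro conjI)
    show "B1 * A2 * B2 \<noteq> 0"
      using 1(1) 2(1) \<open>A2 \<noteq> 0\<close> by simp
    show "\<forall>(x, y)\<in>D. eval2 (B1 * A2 * B2) x y \<noteq> 0 \<longrightarrow>
        f x y / g x y = eval2 (A1 * B2 * B2) x y / eval2 (B1 * A2 * B2) x y"
    proof clarify
      fix x y
      assume xy: "(x, y) \<in> D" and nz: "eval2 (B1 * A2 * B2) x y \<noteq> 0"
      have fg: "f x y = eval2 A1 x y / eval2 B1 x y" "g x y = eval2 A2 x y / eval2 B2 x y"
        using 1(2) 2(2) xy nz by auto
      show "f x y / g x y = eval2 (A1 * B2 * B2) x y / eval2 (B1 * A2 * B2) x y"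
        unfolding fg using nz by (simp add: field_simps)
    qed
  qed
qed

lemma is_hom_power_of_rational_root:
  assumes hP: "hom_poly2 a P" and hQ: "hom_poly2 b Q" and deg: "a = b + m * g" and m: "m \<ge> 2"
    and D: "open D" "D \<noteq> {}" and Q0: "Q \<noteq> 0" and f: "rational_on D f"
    and root: "\<And>x y. (x, y) \<in> D \<Longrightarrow> eval2 Q x y \<noteq> 0 \<and> f x y ^ m = ratW P Q x y"
  shows "is_hom_power P Q"
proof -
  obtain A B where B0: "B \<noteq> 0"
    and AB: "\<forall>(x, y)\<in>D. eval2 B x y \<noteq> 0 \<longrightarrow> f x y = eval2 A x y / eval2 B x y"
    using f unfolding rational_on_def by blast
  have "eval2 ((P * B ^ m - A ^ m * Q) * B * Q) x y = 0" if "(x, y) \<in> D" for x y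
  proof (cases "eval2 B x y = 0")
    case False
    then have "(eval2 A x y / eval2 B x y) ^ m = eval2 P x y / eval2 Q x y"
      using root[OF that] AB that by (auto simp: ratW_def)
    then show ?thesis
      using False root[OF that] by (simp add: field_simps power_divide)
  qed simp
  then have "(P * B ^ m - A ^ m * Q) * B * Q = 0"
    using eval2_eq_0_on_open_imp_eq_0[OF D] by blast
  then have "P * B ^ m = A ^ m * Q"
    using B0 Q0 by simp
  then show ?thesis
    using is_hom_powerI[OF hP hQ deg m B0] by blast
qed

lemma lower_powers_not_rational:
  assumes hom: "hom_rat_fun (int N) P Q" and not_power: "\<not> is_hom_power P Q"
    and D: "open D" "D \<noteq> {}"
    and root: "\<And>x y. (x, y) \<in> D \<Longrightarrow> W1 x y \<noteq> 0 \<and> W1 x y ^ N = ratW P Q x y"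
    and M: "0 < M" "M < N"
  shows "\<not> rational_on D (\<lambda>x y. W1 x y ^ M)"
proof
  assume rM: "rational_on D (\<lambda>x y. W1 x y ^ M)"
  have W1_nz: "W1 x y \<noteq> 0" if "(x, y) \<in> D" for x y
    using root[OF that] ..
  have Q0: "eval2 Q x y \<noteq> 0" if "(x, y) \<in> D" for x y
    using root[OF that] by (auto simp: ratW_def)
  have rN: "rational_on D (\<lambda>x y. W1 x y ^ N)"
    unfolding rational_on_def
    by (rule exI[of _ P], rule exI[of _ Q]) (use hom root in \<open>auto simp: hom_rat_fun_def ratW_def\<close>)
  define g where "g = gcd M N"
  obtain \<alpha> \<beta> where bezout: "M * \<alpha> = N * \<beta> + g"
    using bezout_nat[of M N] M unfolding g_def by auto
  have "rational_on D (\<lambda>x y. (W1 x y ^ M) ^ \<alpha> / (W1 x y ^ N) ^ \<beta>)"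
    by (rule rational_on_divide[OF D rational_on_power[OF rM] rational_on_power[OF rN]])
      (simp add: W1_nz)
  moreover have "(W1 x y ^ M) ^ \<alpha> / (W1 x y ^ N) ^ \<beta> = W1 x y ^ g" if "(x, y) \<in> D" for x y
  proof -
    have "(W1 x y ^ M) ^ \<alpha> = (W1 x y ^ N) ^ \<beta> * W1 x y ^ g"
      by (simp add: bezout power_add flip: power_mult)
    then show ?thesis
      using W1_nz[OF that] by simp
  qed
  ultimately have rg: "rational_on D (\<lambda>x y. W1 x y ^ g)"
    by (rule rational_on_cong)
  obtain m where Nm: "N = g * m"
    using gcd_dvd2[of M N] unfolding g_def by (elim dvdE)
  have "g \<le> M"
    using M by (simp add: g_def)
  then have "m \<noteq> 1"
    using M Nm by auto
  moreover have "m \<noteq> 0"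
    using M Nm by (metis less_nat_zero_code mult_0_right)
  ultimately have m: "m \<ge> 2"
    by linarith
  obtain a b where deg: "hom_poly2 a P" "hom_poly2 b Q" "a = b + N"
    using hom_rat_fun_degrees[OF hom] .
  have "is_hom_power P Q"
  proof (rule is_hom_power_of_rational_root[OF deg(1,2) _ m D _ rg])
    show "a = b + m * g"
      by (simp add: deg(3) Nm)
    show "Q \<noteq> 0"
      using hom by (simp add: hom_rat_fun_def)
    show "eval2 Q x y \<noteq> 0 \<and> (W1 x y ^ g) ^ m = ratW P Q x y" if "(x, y) \<in> D" for x y
      using Q0[OF that] root[OF that] by (simp add: Nm flip: power_mult)
  qed
  with not_power show False ..
qed

lemma ratWx_altdef: "ratWx P Q x y = eval2 (dx2 P * Q - P * dx2 Q) x y / eval2 Q x y ^ 2"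
  by (simp add: ratWx_def)

lemma ratW_has_field_derivative:
  assumes "eval2 Q x y \<noteq> 0"
  shows "((\<lambda>s. ratW P Q s y) has_field_derivative ratWx P Q x y) (at x)"
  unfolding ratW_def ratWx_def power2_eq_square
  by (intro DERIV_divide eval2_has_field_derivative assms)

lemma ratW_locally_injective:
  assumes Q0: "eval2 Q x y \<noteq> 0" and Wx0: "ratWx P Q x y \<noteq> 0"
  obtains \<rho> where "\<rho> > 0" "\<forall>v\<in>ball x \<rho>. eval2 Q v y \<noteq> 0" "inj_on (\<lambda>v. ratW P Q v y) (ball x \<rho>)"
proof -
  define S where "S = {v. eval2 Q v y \<noteq> 0}"
  have "open S"
    unfolding S_def by (intro open_Collect_neq continuous_intros)
  moreover have "x \<in> S"
    using Q0 by (simp add: S_def)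
  moreover have "(\<lambda>v. ratW P Q v y) holomorphic_on S"
    using \<open>open S\<close> ratW_has_field_derivative[of Q _ y P] by (auto simp: S_def holomorphic_on_open)
  moreover have "deriv (\<lambda>v. ratW P Q v y) x \<noteq> 0"
    using DERIV_imp_deriv[OF ratW_has_field_derivative[OF Q0]] Wx0 by simp
  ultimately obtain \<rho> where "\<rho> > 0" "ball x \<rho> \<subseteq> S" "inj_on (\<lambda>v. ratW P Q v y) (ball x \<rho>)"
    using has_complex_derivative_locally_injective by blast
  then show thesis
    using that by (auto simp: S_def)
qed

text \<open>Caratheodory's form of differentiability: \<open>h v - h x = e v \<cdot> (v - x)\<close> with \<open>e\<close>
  continuous at \<open>x\<close> and \<open>e x = h'\<close>, so \<open>(s z - x) / z = (g z / z) / e (s z)\<close>.\<close>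
lemma implicit_difference_quotient_tendsto:
  fixes h :: "complex \<Rightarrow> complex"
  assumes hd: "(h has_field_derivative h') (at x)" and h'0: "h' \<noteq> 0"
    and sl: "(s \<longlongrightarrow> x) (at 0)" and ev: "eventually (\<lambda>z. h (s z) - h x = g z) (at 0)"
    and gl: "((\<lambda>z. g z / z) \<longlongrightarrow> L) (at 0)"
  shows "((\<lambda>z. (s z - x) / z) \<longlongrightarrow> L / h') (at 0)"
proof -
  define e where "e v = (if v = x then h' else (h v - h x) / (v - x))" for v
  have "(e \<longlongrightarrow> h') (at x)"
  proof (rule Lim_transform_eventually)
    show "((\<lambda>v. (h v - h x) / (v - x)) \<longlongrightarrow> h') (at x)"
      using hd by (simp add: has_field_derivative_iff)
    show "eventually (\<lambda>v. (h v - h x) / (v - x) = e v) (at x)"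
      unfolding eventually_at_filter by (intro always_eventually) (simp add: e_def)
  qed
  then have "isCont e x"
    by (simp add: isCont_def e_def)
  then have el: "((\<lambda>z. e (s z)) \<longlongrightarrow> h') (at 0)"
    using isCont_tendsto_compose[OF _ sl] by (fastforce simp: e_def)
  have hs: "h (s z) - h x = e (s z) * (s z - x)" for z
    by (cases "s z = x") (simp_all add: e_def)
  have "eventually (\<lambda>z. (g z / z) / e (s z) = (s z - x) / z) (at 0)"
    using ev tendsto_imp_eventually_ne[OF el h'0]
  proof eventually_elim
    case (elim z)
    then have "g z = e (s z) * (s z - x)"
      using hs[of z] by simp
    then show ?case
      using elim by simp
  qed
  moreover have "((\<lambda>z. (g z / z) / e (s z)) \<longlongrightarrow> L / h') (at 0)"
    using gl el h'0 by (rule tendsto_divide)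
  ultimately show ?thesis
    by (rule Lim_transform_eventually[rotated])
qed

lemma power_difference_quotient_tendsto:
  "((\<lambda>z::complex. ((1 + z * c) ^ N - 1) / z) \<longlongrightarrow> of_nat N * c) (at 0)"
proof -
  have "((\<lambda>z. (1 + z * c) ^ N) has_field_derivative of_nat N * (c * (1 + 0 * c) ^ (N - 1))) (at 0)"
    by (auto intro!: derivative_eq_intros)
  then show ?thesis
    by (simp add: has_field_derivative_iff)
qed

text \<open>The set of \<open>v\<close> with \<open>\<sigma> v\<close> in the ball is relatively open; on it \<open>\<sigma> = \<tau>\<close> lies in the
  smaller closed ball, so it is also relatively closed.\<close>
lemma eq_on_connected_by_injectivity:
  fixes \<sigma> \<tau> :: "'a::topological_space \<Rightarrow> 'b::metric_space"
  assumes conn: "connected \<Omega>" and cont: "continuous_on \<Omega> \<sigma>"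
    and inj: "inj_on h (ball c \<rho>)" and r: "r < \<rho>" and \<tau>: "\<forall>v\<in>\<Omega>. \<tau> v \<in> cball c r"
    and eq: "\<forall>v\<in>\<Omega>. \<sigma> v \<in> ball c \<rho> \<longrightarrow> h (\<sigma> v) = h (\<tau> v)"
    and start: "v0 \<in> \<Omega>" "\<sigma> v0 \<in> ball c \<rho>"
  shows "\<forall>v\<in>\<Omega>. \<sigma> v = \<tau> v"
proof -
  have cball_sub: "cball c r \<subseteq> ball c \<rho>"
    using r by auto
  define T where "T = \<Omega> \<inter> \<sigma> -` ball c \<rho>"
  have T_eq: "\<sigma> v = \<tau> v" if "v \<in> T" for v
  proof -
    have v: "v \<in> \<Omega>" "\<sigma> v \<in> ball c \<rho>"
      using that by (auto simp: T_def)
    then have "\<tau> v \<in> ball c \<rho>"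
      using \<tau> cball_sub by blast
    with v show ?thesis
      using eq inj_onD[OF inj] by blast
  qed
  have "openin (top_of_set \<Omega>) T"
    unfolding T_def by (rule continuous_openin_preimage_gen[OF cont open_ball])
  moreover have "T = \<Omega> \<inter> \<sigma> -` cball c r"
    using T_eq \<tau> cball_sub by (auto simp: T_def)
  then have "closedin (top_of_set \<Omega>) T"
    using continuous_closedin_preimage[OF cont closed_cball] by simp
  moreover have "T \<noteq> {}"
    using start by (auto simp: T_def)
  ultimately have "T = \<Omega>"
    using conn unfolding connected_clopen by blast
  then show ?thesis
    using T_eq by blast
qed

lemma has_field_derivative_power_eq:
  assumes f: "(f has_field_derivative d) (at x)" and g: "(g has_field_derivative g') (at x)"
    and eq: "eventually (\<lambda>t. f t ^ N = g t) (nhds x)"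
  shows "g' = of_nat N * (d * f x ^ (N - 1))"
proof -
  have "(g has_field_derivative of_nat N * (d * f x ^ (N - 1))) (at x)"
    using DERIV_power[OF f, of N] DERIV_cong_ev[OF refl eq refl] by simp
  then show ?thesis
    using g DERIV_unique by blast
qed

lemma eventually_norm_less_at_0: "r > 0 \<Longrightarrow> eventually (\<lambda>z::complex. norm z < r) (at 0)"
  unfolding eventually_at by (auto intro!: exI[of _ r])

section \<open>The second component \<open>y / (y + 1)\<close>\<close>

lemma tendsto_flow_v: "((\<lambda>z. z * y / (z * y + 1) / z) \<longlongrightarrow> y) (at (0::complex))"
proof (rule Lim_transform_eventually)
  show "((\<lambda>z. y / (1 + z * y)) \<longlongrightarrow> y) (at (0::complex))"
    by (auto intro!: tendsto_eq_intros)
  show "\<forall>\<^sub>F z in at 0. y / (1 + z * y) = z * y / (z * y + 1) / z"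
    unfolding eventually_at_filter by (intro always_eventually) (simp add: add.commute)
qed

lemma tendsto_flow_v_quotient:
  "((\<lambda>z. (z * y / (z * y + 1) / z - y) / z) \<longlongrightarrow> - (y ^ 2)) (at (0::complex))"
proof (rule Lim_transform_eventually)
  show "((\<lambda>z. - (y ^ 2) / (1 + z * y)) \<longlongrightarrow> - (y ^ 2)) (at (0::complex))"
    by (auto intro!: tendsto_eq_intros)
  have "((\<lambda>z. 1 + z * y) \<longlongrightarrow> 1) (at (0::complex))"
    by (auto intro!: tendsto_eq_intros)
  then have "\<forall>\<^sub>F z in at (0::complex). 1 + z * y \<noteq> 0"
    by (rule tendsto_imp_eventually_ne) simp
  moreover have "\<forall>\<^sub>F z in at (0::complex). z \<noteq> 0"
    by (simp add: eventually_at_filter)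
  ultimately show "\<forall>\<^sub>F z in at 0. - (y ^ 2) / (1 + z * y) = (z * y / (z * y + 1) / z - y) / z"
  proof eventually_elim
    case (elim z)
    have "z * y / (z * y + 1) / z = y / (1 + z * y)"
      using elim by (simp add: add.commute)
    also have "\<dots> = y + z * - (y ^ 2) / (1 + z * y)"
      using elim by (simp add: field_simps power2_eq_square)
    finally show ?case
      using elim by simp
  qed
qed

lemma algebraic_on_flow_v: "algebraic_on S (\<lambda>x y. y / (y + 1))"
proof -
  define R :: "complex poly poly poly" where
    "R = ([:[:0, 1:]:] + 1) * (([:[:0, 1:]:] + 1) * [:0, 1:] - [:[:0, 1:]:])"
  have "eval3 R 0 0 1 = 1"
    by (simp add: R_def)
  moreover have "eval3 R x y (y / (y + 1)) = 0" for x y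
    by (cases "y + 1 = 0") (simp_all add: R_def add.commute)
  ultimately show ?thesis
    unfolding algebraic_on_def by (auto intro!: exI[of _ R])
qed

lemma fpow_flow_v:
  "t \<noteq> 0 \<Longrightarrow> fpow U (\<lambda>x y. y / (y + 1)) t (a, c) = (U (t * a) (t * c) / t, c / (1 + t * c))"
  by (simp add: fpow_def add.commute)

lemma vf2_flow_v: "vf2 (\<lambda>x y. y / (y + 1)) x y = - (y ^ 2)"
  unfolding vf2_def by (rule tendsto_Lim[OF trivial_limit_at tendsto_flow_v_quotient])

section \<open>Homogeneous \<open>N\<close>-th roots\<close>

lemma not_nonpos_Reals_if_near_1: "norm (q - 1) < 1 \<Longrightarrow> (q::complex) \<notin> \<real>\<^sub>\<le>\<^sub>0"
  using abs_Re_le_cmod[of "q - 1"] by (auto simp: complex_nonpos_Reals_iff)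

text \<open>For \<open>W\<close> homogeneous of degree \<open>N\<close> this is an \<open>N\<close>-th root of \<open>W(x, y) = y\<^sup>N W(x/y, 1)\<close>,
  holomorphic as long as \<open>W(x/y, 1)/w\<^sub>0\<close> stays off the negative real axis.\<close>
definition hom_root :: "nat \<Rightarrow> (complex \<Rightarrow> complex \<Rightarrow> complex) \<Rightarrow> complex \<Rightarrow> complex \<Rightarrow> complex \<Rightarrow> complex" where
  "hom_root N W w0 x y = y * exp ((Ln w0 + Ln (W (x / y) 1 / w0)) / of_nat N)"

lemma hom_root_power:
  assumes "N > 0" "w0 \<noteq> 0" "W (x / y) 1 \<noteq> 0"
  shows "hom_root N W w0 x y ^ N = y ^ N * W (x / y) 1"
proof -
  have "exp (a / of_nat N) ^ N = exp a" for a :: complex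
    using assms(1) by (simp flip: exp_of_nat_mult)
  then show ?thesis
    using assms(2,3) by (simp add: hom_root_def power_mult_distrib exp_add)
qed

lemma hom_root_nonzero: "y \<noteq> 0 \<Longrightarrow> hom_root N W w0 x y \<noteq> 0"
  by (simp add: hom_root_def)

lemma hom_root_scale: "t \<noteq> 0 \<Longrightarrow> hom_root N W w0 (t * x) (t * y) = t * hom_root N W w0 x y"
  by (simp add: hom_root_def)

lemma hom_root_has_field_derivative:
  assumes y: "y \<noteq> 0" and W': "((\<lambda>s. W s 1) has_field_derivative W') (at (x / y))"
    and not_nonpos: "W (x / y) 1 / w0 \<notin> \<real>\<^sub>\<le>\<^sub>0"
  obtains d where "((\<lambda>t. hom_root N W w0 t y) has_field_derivative d) (at x)"
proof -
  have "((\<lambda>t. t / y) has_field_derivative 1 / y) (at x)"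
    using y by (auto intro!: derivative_eq_intros)
  from DERIV_chain2[OF W' this]
  have "((\<lambda>t. W (t / y) 1 / w0) has_field_derivative W' * (1 / y) / w0) (at x)"
    by (rule DERIV_cdivide)
  from DERIV_chain2[OF has_field_derivative_Ln[OF not_nonpos] this]
  have Ln': "((\<lambda>t. Ln (W (t / y) 1 / w0)) has_field_derivative
      inverse (W (x / y) 1 / w0) * (W' * (1 / y) / w0)) (at x)" .
  show thesis
    by (rule that[unfolded hom_root_def],
        rule DERIV_cmult[OF DERIV_chain2[OF DERIV_exp DERIV_cdivide[OF DERIV_add[OF DERIV_const Ln']]]])
qed

text \<open>The level equation \<open>W\<^sub>1 \<rho> + (W\<^sub>1)\<^sub>x (y \<varpi> - x \<rho>) = 0\<close> for \<open>\<varpi> = N y W/W\<^sub>x - x y\<close>,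
  \<open>\<rho> = -y\<^sup>2\<close>, where \<open>d = (W\<^sub>1)\<^sub>x\<close> and \<open>W\<^sub>x = N W\<^sub>1\<^sup>N\<^sup>-\<^sup>1 d\<close> comes from \<open>W\<^sub>1\<^sup>N = W\<close>.\<close>
lemma level_equation_of_root:
  fixes w1 d W Wx x y :: complex
  assumes "N > 0" "w1 \<noteq> 0" "w1 ^ N = W" "Wx = of_nat N * (d * w1 ^ (N - 1))" "Wx \<noteq> 0"
  shows "w1 * - (y ^ 2) + d * (y * (of_nat N * y * W / Wx - x * y) - x * - (y ^ 2)) = 0"
proof -
  obtain M where M: "N = Suc M"
    using assms(1) gr0_implies_Suc by blast
  have "d \<noteq> 0"
    using assms(4,5) by auto
  have "of_nat N * y * W / Wx = y * w1 / d"
    using assms(2-4) \<open>d \<noteq> 0\<close> by (auto simp: M simp del: of_nat_Suc)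
  then have "y * (of_nat N * y * W / Wx - x * y) - x * - (y ^ 2) = y * (y * w1 / d)"
    by (simp add: algebra_simps power2_eq_square)
  then show ?thesis
    using \<open>d \<noteq> 0\<close> by (simp add: power2_eq_square)
qed

section \<open>The flow defined by \<open>U\<close>\<close>

locale implicit_flow =
  fixes N :: nat and P Q :: "complex poly poly"
    and U :: "complex \<Rightarrow> complex \<Rightarrow> complex"
    and S D0 :: "(complex \<times> complex) set"
  assumes N_pos: "N > 0"
    and W_hom: "hom_rat_fun (int N) P Q"
    and W_not_power: "\<not> is_hom_power P Q"
    and U_cont: "continuous_on S (\<lambda>(x, y). U x y)"
    and U_eq: "\<forall>(x, y)\<in>S. y + 1 \<noteq> 0 \<and> eval2 Q x y \<noteq> 0 \<and> eval2 Q (U x y) (y / (y + 1)) \<noteq> 0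
                 \<longrightarrow> ratW P Q (U x y) (y / (y + 1)) = ratW P Q x y"
    and D0_open: "open D0" and D0_ne: "D0 \<noteq> {}"
    and cone: "\<exists>r>0. \<forall>(x, y)\<in>D0. \<forall>z. z \<noteq> 0 \<and> norm z < r \<longrightarrow> (z * x, z * y) \<in> S"
    and U_bdry: "\<forall>(x, y)\<in>D0. ((\<lambda>z. U (z * x) (z * y) / z) \<longlongrightarrow> x) (at 0)"
begin

abbreviation flow :: "complex \<Rightarrow> complex \<times> complex \<Rightarrow> complex \<times> complex" where
  "flow \<equiv> fpow U (\<lambda>x y. y / (y + 1))"

lemma Q_nonzero: "Q \<noteq> 0"
  using W_hom by (simp add: hom_rat_fun_def)

lemma P_nonzero: "P \<noteq> 0"
proof
  assume "P = 0"
  have "hom_rat_fun 0 0 1"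
    unfolding hom_rat_fun_def hom_poly2_def by (auto simp: coeff_1)
  then have "is_hom_power P Q"
    unfolding is_hom_power_def \<open>P = 0\<close> by (intro exI[of _ 0] exI[of _ 1] exI[of _ 2]) auto
  with W_not_power show False ..
qed

lemma eval2_Q_scale_eq_0_iff: "t \<noteq> 0 \<Longrightarrow> eval2 Q (t * x) (t * y) = 0 \<longleftrightarrow> eval2 Q x y = 0"
  using hom_rat_fun_degrees[OF W_hom] eval2_scale_eq_0_iff by metis

lemma eventually_cone_in_S: "(x, y) \<in> D0 \<Longrightarrow> eventually (\<lambda>t. (t * x, t * y) \<in> S) (at 0)"
proof -
  assume xy: "(x, y) \<in> D0"
  obtain r where "r > 0" "\<forall>(x, y)\<in>D0. \<forall>z. z \<noteq> 0 \<and> norm z < r \<longrightarrow> (z * x, z * y) \<in> S"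
    using cone by blast
  then show ?thesis
    using xy eventually_norm_less_at_0[of r] unfolding eventually_at_filter
    by (auto elim!: eventually_mono)
qed

text \<open>The defining equation of \<open>U\<close> at \<open>(t a, t c)\<close>, divided by \<open>t\<^sup>N\<close>.\<close>
lemma ratW_invariant:
  assumes t: "t \<noteq> 0" and inS: "(t * a, t * c) \<in> S" and tc: "1 + t * c \<noteq> 0"
    and Q0: "eval2 Q a c \<noteq> 0" and Q1: "eval2 Q (U (t * a) (t * c) / t) (c / (1 + t * c)) \<noteq> 0"
  shows "ratW P Q (U (t * a) (t * c) / t) (c / (1 + t * c)) = ratW P Q a c"
proof -
  define u where "u = U (t * a) (t * c) / t"
  have scaled: "U (t * a) (t * c) = t * u" "t * c / (t * c + 1) = t * (c / (1 + t * c))"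
    using t by (simp_all add: u_def add.commute)
  have "t * c + 1 \<noteq> 0"
    using tc by (simp add: add.commute)
  moreover have "eval2 Q (t * a) (t * c) \<noteq> 0"
    using Q0 eval2_Q_scale_eq_0_iff[OF t] by simp
  moreover have "eval2 Q (U (t * a) (t * c)) (t * c / (t * c + 1)) \<noteq> 0"
    using Q1[folded u_def] eval2_Q_scale_eq_0_iff[OF t, of u "c / (1 + t * c)"] unfolding scaled
    by blast
  ultimately have "ratW P Q (U (t * a) (t * c)) (t * c / (t * c + 1)) = ratW P Q (t * a) (t * c)"
    using bspec[OF U_eq inS] by simp
  then have "t ^ N * ratW P Q u (c / (1 + t * c)) = t ^ N * ratW P Q a c"
    unfolding scaled ratW_scale[OF W_hom t] .
  then show ?thesis
    using t by (simp add: u_def)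
qed

text \<open>Multiplying \<open>\<phi>\<^sup>t(a, c)\<close> by \<open>1 + t c\<close> restores the second coordinate \<open>c\<close>, so the first
  coordinate can be compared with \<open>a\<close> on the fixed line \<open>W(\<cdot>, c)\<close>.\<close>
definition rescaled :: "complex \<Rightarrow> complex \<Rightarrow> complex \<Rightarrow> complex" where
  "rescaled a c t = (1 + t * c) * (U (t * a) (t * c) / t)"

lemma ratW_rescaled:
  assumes t: "t \<noteq> 0" and inS: "(t * a, t * c) \<in> S" and tc: "1 + t * c \<noteq> 0"
    and Q0: "eval2 Q a c \<noteq> 0" and Q1: "eval2 Q (rescaled a c t) c \<noteq> 0"
  shows "ratW P Q (rescaled a c t) c = (1 + t * c) ^ N * ratW P Q a c"
proof -
  define k u c' where "k = 1 + t * c" and "u = U (t * a) (t * c) / t" and "c' = c / (1 + t * c)"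
  have eqs: "k * u = rescaled a c t" "k * c' = c"
    using tc by (simp_all add: rescaled_def k_def u_def c'_def)
  have "eval2 Q (k * u) (k * c') \<noteq> 0"
    unfolding eqs by (rule Q1)
  then have "eval2 Q u c' \<noteq> 0"
    using eval2_Q_scale_eq_0_iff tc by (simp add: k_def)
  then have "ratW P Q u c' = ratW P Q a c"
    using ratW_invariant[OF t inS tc Q0] by (simp add: u_def c'_def)
  then have "ratW P Q (k * u) (k * c') = k ^ N * ratW P Q a c"
    using ratW_scale[OF W_hom, of k] tc by (simp add: k_def)
  then have "ratW P Q (rescaled a c t) c = k ^ N * ratW P Q a c"
    unfolding eqs .
  then show ?thesis
    by (simp add: k_def)
qed

lemma rescaled_tendsto:
  assumes "(x, y) \<in> D0"
  shows "(rescaled x y \<longlongrightarrow> x) (at 0)"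
proof -
  have "((\<lambda>t. (1 + t * y) * (U (t * x) (t * y) / t)) \<longlongrightarrow> (1 + 0 * y) * x) (at 0)"
    using U_bdry assms by (intro tendsto_intros) auto
  then show ?thesis
    unfolding rescaled_def by simp
qed

lemma eventually_ratW_rescaled:
  assumes D0: "(x, y) \<in> D0" and Q0: "eval2 Q x y \<noteq> 0"
  shows "eventually (\<lambda>t. ratW P Q (rescaled x y t) y = (1 + t * y) ^ N * ratW P Q x y) (at 0)"
proof -
  have "eventually (\<lambda>t. eval2 Q (rescaled x y t) y \<noteq> 0) (at 0)"
    using tendsto_eval2[OF rescaled_tendsto[OF D0] tendsto_const] Q0 by (rule tendsto_imp_eventually_ne)
  moreover have "eventually (\<lambda>t. 1 + t * y \<noteq> 0) (at 0)"
    by (rule tendsto_imp_eventually_ne[of _ 1]) (auto intro!: tendsto_eq_intros)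
  moreover have "eventually (\<lambda>t::complex. t \<noteq> 0) (at 0)"
    by (simp add: eventually_at_filter)
  ultimately show ?thesis
    using eventually_cone_in_S[OF D0]
    by eventually_elim (use ratW_rescaled Q0 in blast)
qed

lemma first_component_quotient_tendsto:
  assumes D0: "(x, y) \<in> D0" and Q0: "eval2 Q x y \<noteq> 0" and Wx0: "ratWx P Q x y \<noteq> 0"
  shows "((\<lambda>z. (U (z * x) (z * y) / z - x) / z)
     \<longlongrightarrow> of_nat N * y * ratW P Q x y / ratWx P Q x y - x * y) (at 0)"
proof -
  define L where "L = of_nat N * y * ratW P Q x y / ratWx P Q x y"
  have ev: "eventually (\<lambda>z. ratW P Q (rescaled x y z) y - ratW P Q x y
      = ((1 + z * y) ^ N - 1) * ratW P Q x y) (at 0)"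
    using eventually_ratW_rescaled[OF D0 Q0] by eventually_elim (simp add: algebra_simps)
  have "((\<lambda>z. ((1 + z * y) ^ N - 1) * ratW P Q x y / z) \<longlongrightarrow> of_nat N * y * ratW P Q x y) (at 0)"
    using tendsto_mult_right[OF power_difference_quotient_tendsto[of y N], of "ratW P Q x y"] by simp
  from implicit_difference_quotient_tendsto[OF ratW_has_field_derivative[OF Q0] Wx0
      rescaled_tendsto[OF D0] ev this]
  have "((\<lambda>z. (rescaled x y z - x) / z) \<longlongrightarrow> L) (at 0)"
    by (simp add: L_def)
  then have "((\<lambda>z. ((rescaled x y z - x) / z - x * y) / (1 + z * y)) \<longlongrightarrow> (L - x * y) / (1 + 0 * y)) (at 0)"
    by (intro tendsto_intros) auto
  moreover have "eventually (\<lambda>z. ((rescaled x y z - x) / z - x * y) / (1 + z * y)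
      = (U (z * x) (z * y) / z - x) / z) (at 0)"
  proof -
    have "eventually (\<lambda>z. 1 + z * y \<noteq> 0) (at 0)"
      by (rule tendsto_imp_eventually_ne[of _ 1]) (auto intro!: tendsto_eq_intros)
    moreover have "eventually (\<lambda>z::complex. z \<noteq> 0) (at 0)"
      by (simp add: eventually_at_filter)
    ultimately show ?thesis
    proof eventually_elim
      case (elim z)
      define u where "u = U (z * x) (z * y) / z"
      have "(rescaled x y z - x) / z - x * y = (u - x) * (1 + z * y) / z"
        using elim by (simp add: rescaled_def u_def field_simps)
      then show ?case
        using elim by (simp add: u_def)
    qed
  qed
  ultimately show ?thesis
    by (simp add: L_def Lim_transform_eventually)
qed

text \<open>If \<open>W\<^sub>x\<close> vanished identically, \<open>W(\<cdot>, y)\<close> would be locally constant, contradicting the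
  growth \<open>W(rescaled x y t, y) = (1 + t y)\<^sup>N W(x, y)\<close> along the flow.\<close>
lemma dx_numerator_nonzero: "dx2 P * Q - P * dx2 Q \<noteq> 0"
proof
  assume E0: "dx2 P * Q - P * dx2 Q = 0"
  have "P * Q * [:0, 1:] \<noteq> 0"
    using P_nonzero Q_nonzero by simp
  then obtain x0 y0 where xy0: "(x0, y0) \<in> D0" "eval2 (P * Q * [:0, 1:]) x0 y0 \<noteq> 0"
    using eval2_nonzero_in_open D0_open D0_ne by blast
  then have nz: "eval2 P x0 y0 \<noteq> 0" "eval2 Q x0 y0 \<noteq> 0" "y0 \<noteq> 0"
    by auto
  define h where "h v = ratW P Q v y0" for v
  have "open {v. eval2 Q v y0 \<noteq> 0}"
    by (intro open_Collect_neq continuous_intros)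
  then obtain \<rho> where \<rho>: "\<rho> > 0" "ball x0 \<rho> \<subseteq> {v. eval2 Q v y0 \<noteq> 0}"
    using nz(2) open_contains_ball by blast
  have "\<exists>c. \<forall>v\<in>ball x0 \<rho>. h v = c"
  proof (rule has_field_derivative_zero_constant[OF convex_ball])
    fix v
    assume "v \<in> ball x0 \<rho>"
    then have "(h has_field_derivative ratWx P Q v y0) (at v)"
      using \<rho>(2) ratW_has_field_derivative unfolding h_def by blast
    then show "(h has_field_derivative 0) (at v within ball x0 \<rho>)"
      by (simp add: ratWx_altdef E0 has_field_derivative_at_within)
  qed
  then have h_const: "\<forall>v\<in>ball x0 \<rho>. h v = h x0"
    using \<rho>(1) by force
  have "eventually (\<lambda>t. rescaled x0 y0 t \<in> ball x0 \<rho>) (at 0)"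
    using rescaled_tendsto[OF xy0(1)] \<rho>(1) by (intro topological_tendstoD) auto
  then have "eventually (\<lambda>t. ((1 + t * y0) ^ N - 1) / t = 0) (at 0)"
    using eventually_ratW_rescaled[OF xy0(1) nz(2)]
  proof eventually_elim
    case (elim t)
    then have "((1 + t * y0) ^ N - 1) * h x0 = 0"
      using h_const by (simp add: h_def algebra_simps)
    then show ?case
      using nz by (simp add: h_def ratW_def)
  qed
  then have "((\<lambda>t. ((1 + t * y0) ^ N - 1) / t) \<longlongrightarrow> 0) (at 0)"
    by (rule tendsto_eventually)
  with power_difference_quotient_tendsto have "of_nat N * y0 = 0"
    using tendsto_unique[OF at_neq_bot] by blast
  then show False
    using N_pos nz(3) by simp
qed

text \<open>Data at a point \<open>(x, y)\<close>: a cone radius \<open>r\<close>, a ball of radius \<open>\<rho>\<close> on which \<open>W(\<cdot>, y)\<close> is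
  injective, and a time bound \<open>\<delta>\<close> below which the normalized flow stays in the half ball.\<close>
context
  fixes x y :: complex and r \<rho> \<delta> :: real
  assumes D0: "(x, y) \<in> D0" and Q0: "eval2 Q x y \<noteq> 0"
    and cone_r: "\<forall>(a, c)\<in>D0. \<forall>t. t \<noteq> 0 \<and> norm t < r \<longrightarrow> (t * a, t * c) \<in> S"
    and \<rho>: "\<rho> > 0" and inj: "inj_on (\<lambda>v. ratW P Q v y) (ball x \<rho>)"
    and Q_ball: "\<forall>v\<in>ball x \<rho>. eval2 Q v y \<noteq> 0"
    and near: "\<And>t. t \<noteq> 0 \<Longrightarrow> norm t < \<delta> \<Longrightarrow>
      rescaled x y t \<in> ball x (\<rho> / 2) \<and> norm t < r \<and> norm (t * y) < 1"
begin

lemma near_facts: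
  assumes "t \<noteq> 0" "norm t < \<delta>"
  shows "(t * x, t * y) \<in> S" "1 + t * y \<noteq> 0" "eval2 Q (rescaled x y t) y \<noteq> 0"
proof -
  show "(t * x, t * y) \<in> S"
    using cone_r D0 near[OF assms] assms(1) by auto
  show "1 + t * y \<noteq> 0"
    using near[OF assms] by (metis add_eq_0_iff norm_minus_cancel norm_one order_less_irrefl)
  show "eval2 Q (rescaled x y t) y \<noteq> 0"
    using near[OF assms] Q_ball \<rho> by auto
qed

lemma ratW_rescaled_near:
  "t \<noteq> 0 \<Longrightarrow> norm t < \<delta> \<Longrightarrow> ratW P Q (rescaled x y t) y = (1 + t * y) ^ N * ratW P Q x y"
  using ratW_rescaled[OF _ _ _ Q0] near_facts by blast

text \<open>Both sides equal \<open>(1 + (z + v) y)\<^sup>N W(x, y)\<close>.\<close>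
lemma ratW_two_steps:
  fixes z v :: complex
  defines "a \<equiv> U (z * x) (z * y) / z" and "c \<equiv> y / (1 + z * y)"
  assumes z: "z \<noteq> 0" "norm z < \<delta>" and v: "v \<noteq> 0" "z + v \<noteq> 0" "norm (z + v) < \<delta>"
    and inS: "(v * a, v * c) \<in> S" and Q1: "eval2 Q ((1 + z * y) * rescaled a c v) y \<noteq> 0"
  shows "ratW P Q ((1 + z * y) * rescaled a c v) y = ratW P Q (rescaled x y (z + v)) y"
proof -
  have zy: "1 + z * y \<noteq> 0"
    using near_facts(2)[OF z] .
  have k: "(1 + z * y) * (1 + v * c) = 1 + (z + v) * y"
    using zy by (simp add: c_def field_simps)
  then have vc: "1 + v * c \<noteq> 0"
    using near_facts(2)[OF v(2,3)] by auto
  have rescaled_z: "rescaled x y z = (1 + z * y) * a" and y: "y = (1 + z * y) * c"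
    using zy by (simp_all add: rescaled_def a_def c_def)
  have "eval2 Q ((1 + z * y) * a) ((1 + z * y) * c) \<noteq> 0"
    using near_facts(3)[OF z] by (simp flip: rescaled_z y)
  then have Qac: "eval2 Q a c \<noteq> 0"
    using eval2_Q_scale_eq_0_iff[OF zy] by blast
  have "ratW P Q a c = ratW P Q x y"
    using ratW_invariant[OF z(1) near_facts(1)[OF z] zy Q0] Qac by (simp add: a_def c_def)
  moreover have "eval2 Q (rescaled a c v) c \<noteq> 0"
    using Q1 eval2_Q_scale_eq_0_iff[OF zy] by (subst (asm) (2) y) blast
  ultimately have "ratW P Q (rescaled a c v) c = (1 + v * c) ^ N * ratW P Q x y"
    using ratW_rescaled[OF v(1) inS vc Qac] by simp
  then have "ratW P Q ((1 + z * y) * rescaled a c v) y = ((1 + z * y) * (1 + v * c)) ^ N * ratW P Q x y"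
    using ratW_scale[OF W_hom zy, of "rescaled a c v" c] by (simp add: power_mult_distrib flip: y)
  then show ?thesis
    unfolding k using ratW_rescaled_near[OF v(2,3)] by simp
qed

text \<open>The two sides have the same \<open>W\<close>-value, so they agree while the left-hand side stays in
  the ball of injectivity, and by continuity in \<open>v\<close> it never leaves it.\<close>
lemma rescaled_composition:
  fixes z :: complex
  defines "a \<equiv> U (z * x) (z * y) / z" and "c \<equiv> y / (1 + z * y)"
  assumes z: "z \<noteq> 0" "norm z < \<delta> / 2" and ac: "(a, c) \<in> D0"
  shows "\<forall>v\<in>ball 0 (\<delta> / 2) - {0, -z}. (1 + z * y) * rescaled a c v = rescaled x y (z + v)"
proof -
  define \<Omega> where "\<Omega> = ball 0 (\<delta> / 2) - {0, -z}"
  define \<sigma> where "\<sigma> v = (1 + z * y) * rescaled a c v" for v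
  have z\<delta>: "norm z < \<delta>"
    using z norm_ge_zero[of z] by linarith
  have \<Omega>: "v \<noteq> 0" "norm v < \<delta>" "z + v \<noteq> 0" "norm (z + v) < \<delta>" if "v \<in> \<Omega>" for v
  proof -
    show "v \<noteq> 0" "z + v \<noteq> 0"
      using that by (auto simp: \<Omega>_def add_eq_0_iff)
    have "norm v < \<delta> / 2"
      using that by (simp add: \<Omega>_def)
    then show "norm v < \<delta>" "norm (z + v) < \<delta>"
      using z(2) norm_triangle_ineq[of z v] norm_ge_zero[of v] by linarith+
  qed
  have inS: "(v * a, v * c) \<in> S" if "v \<in> \<Omega>" for v
    using cone_r ac \<Omega>(1,2)[OF that] near[of v] by auto
  have "continuous_on \<Omega> (\<lambda>v. U (v * a) (v * c))"
    by (rule continuous_on_compose2[OF U_cont, of _ "\<lambda>v. (v * a, v * c)", simplified])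
      (auto intro!: continuous_intros inS)
  then have cont: "continuous_on \<Omega> \<sigma>"
    unfolding \<sigma>_def rescaled_def by (auto intro!: continuous_intros simp: \<Omega>_def)
  obtain v0 where v0: "v0 \<in> \<Omega>" "\<sigma> v0 \<in> ball x \<rho>"
  proof -
    have "(\<sigma> \<longlongrightarrow> (1 + z * y) * a) (at 0)"
      unfolding \<sigma>_def using rescaled_tendsto[OF ac] by (intro tendsto_intros)
    moreover have "(1 + z * y) * a \<in> ball x \<rho>"
      using near[OF z(1) z\<delta>] \<rho> near_facts(2)[OF z(1) z\<delta>] by (auto simp: rescaled_def a_def)
    ultimately have "eventually (\<lambda>v. \<sigma> v \<in> ball x \<rho>) (at 0)"
      by (intro topological_tendstoD) auto
    moreover have "eventually (\<lambda>v. v \<in> \<Omega>) (at 0)"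
      using eventually_norm_less_at_0[of "min (\<delta> / 2) (norm z)"] z
      unfolding eventually_at_filter by (auto simp: \<Omega>_def elim!: eventually_mono)
    ultimately have "eventually (\<lambda>v. v \<in> \<Omega> \<and> \<sigma> v \<in> ball x \<rho>) (at 0)"
      by eventually_elim blast
    then show thesis
      using that eventually_happens'[OF at_neq_bot] by blast
  qed
  have "connected \<Omega>"
    unfolding \<Omega>_def by (intro connected_open_delete_finite) auto
  then have "\<forall>v\<in>\<Omega>. \<sigma> v = rescaled x y (z + v)"
  proof (rule eq_on_connected_by_injectivity[OF _ cont inj _ _ _ v0])
    show "\<rho> / 2 < \<rho>"
      using \<rho> by simp
    show "\<forall>v\<in>\<Omega>. rescaled x y (z + v) \<in> cball x (\<rho> / 2)"
      using near[OF \<Omega>(3,4)] ball_subset_cball by blast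
    show "\<forall>v\<in>\<Omega>. \<sigma> v \<in> ball x \<rho> \<longrightarrow> ratW P Q (\<sigma> v) y = ratW P Q (rescaled x y (z + v)) y"
    proof (intro ballI impI)
      fix v
      assume v: "v \<in> \<Omega>" "\<sigma> v \<in> ball x \<rho>"
      then show "ratW P Q (\<sigma> v) y = ratW P Q (rescaled x y (z + v)) y"
        using ratW_two_steps[OF z(1) z\<delta> \<Omega>(1,3,4)[OF v(1)] inS[OF v(1), unfolded a_def c_def]] Q_ball
        unfolding \<sigma>_def a_def c_def by blast
    qed
  qed
  then show ?thesis
    by (simp add: \<Omega>_def \<sigma>_def)
qed

lemma flow_composition:
  assumes z: "z \<noteq> 0" "norm z < \<delta> / 2" and w: "w \<noteq> 0" "norm w < \<delta> / 2" "z + w \<noteq> 0"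
    and D0z: "flow z (x, y) \<in> D0"
  shows "flow w (flow z (x, y)) = flow (z + w) (x, y)"
proof -
  define a c where "a = U (z * x) (z * y) / z" and "c = y / (1 + z * y)"
  have flow_z: "flow z (x, y) = (a, c)"
    using z by (simp add: fpow_flow_v a_def c_def)
  have "norm z < \<delta>" "norm (z + w) < \<delta>"
    using z w norm_triangle_ineq[of z w] norm_ge_zero[of z] by linarith+
  then have zy: "1 + z * y \<noteq> 0" and zwy: "1 + (z + w) * y \<noteq> 0"
    using near_facts(2) z(1) w(3) by blast+
  have k: "(1 + z * y) * (1 + w * c) = 1 + (z + w) * y"
    using zy by (simp add: c_def field_simps)
  have "w \<in> ball 0 (\<delta> / 2) - {0, -z}"
    using w by (auto simp: add_eq_0_iff)
  then have "(1 + z * y) * rescaled a c w = rescaled x y (z + w)"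
    using rescaled_composition[OF z] D0z flow_z by (simp add: a_def c_def)
  then have "(1 + (z + w) * y) * (U (w * a) (w * c) / w)
      = (1 + (z + w) * y) * (U ((z + w) * x) ((z + w) * y) / (z + w))"
    by (simp add: rescaled_def flip: k mult.assoc)
  then have "U (w * a) (w * c) / w = U ((z + w) * x) ((z + w) * y) / (z + w)"
    using mult_left_cancel[OF zwy] by blast
  moreover have "c / (1 + w * c) = y / (1 + (z + w) * y)"
    using zy by (simp add: c_def flip: k)
  ultimately show ?thesis
    using w z by (simp add: flow_z fpow_flow_v)
qed

end

lemma eventually_flow_in_D0: "(x, y) \<in> D0 \<Longrightarrow> eventually (\<lambda>t. flow t (x, y) \<in> D0) (at 0)"
proof -
  assume D0: "(x, y) \<in> D0"
  have "((\<lambda>t. flow t (x, y)) \<longlongrightarrow> (x, y)) (at 0)"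
    unfolding fpow_def using U_bdry D0 tendsto_flow_v by (auto intro!: tendsto_Pair)
  then show ?thesis
    using D0 D0_open by (intro topological_tendstoD)
qed

lemma eventually_flow_composition:
  assumes D0: "(x, y) \<in> D0" and Q0: "eval2 Q x y \<noteq> 0" and Wx0: "ratWx P Q x y \<noteq> 0"
  shows "eventually (\<lambda>(z, w). z \<noteq> 0 \<and> w \<noteq> 0 \<and> z + w \<noteq> 0 \<longrightarrow>
    flow w (flow z (x, y)) = flow (z + w) (x, y)) (at (0, 0))"
proof -
  obtain r where r: "r > 0" "\<forall>(a, c)\<in>D0. \<forall>t. t \<noteq> 0 \<and> norm t < r \<longrightarrow> (t * a, t * c) \<in> S"
    using cone by blast
  obtain \<rho> where \<rho>: "\<rho> > 0" "\<forall>v\<in>ball x \<rho>. eval2 Q v y \<noteq> 0" "inj_on (\<lambda>v. ratW P Q v y) (ball x \<rho>)"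
    using ratW_locally_injective[OF Q0 Wx0] by blast
  have "eventually (\<lambda>t. rescaled x y t \<in> ball x (\<rho> / 2)) (at 0)"
    using rescaled_tendsto[OF D0] \<rho>(1) by (intro topological_tendstoD) auto
  moreover have "eventually (\<lambda>t. norm (t * y) < 1) (at (0::complex))"
  proof -
    have "((\<lambda>t. norm (t * y)) \<longlongrightarrow> norm (0 * y)) (at (0::complex))"
      by (intro tendsto_intros)
    then show ?thesis
      by (rule order_tendstoD) simp
  qed
  moreover note eventually_flow_in_D0[OF D0]
  ultimately have "eventually (\<lambda>t. (rescaled x y t \<in> ball x (\<rho> / 2) \<and> norm t < r \<and> norm (t * y) < 1)
      \<and> flow t (x, y) \<in> D0) (at 0)"
    using eventually_norm_less_at_0[OF r(1)] by eventually_elim blast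
  then obtain \<delta> where \<delta>: "\<delta> > 0" and near: "\<And>t. t \<noteq> 0 \<Longrightarrow> norm t < \<delta> \<Longrightarrow>
      rescaled x y t \<in> ball x (\<rho> / 2) \<and> norm t < r \<and> norm (t * y) < 1"
    and near_D0: "\<And>t. t \<noteq> 0 \<Longrightarrow> norm t < \<delta> \<Longrightarrow> flow t (x, y) \<in> D0"
    unfolding eventually_at by (auto simp: dist_norm)
  show ?thesis
    unfolding eventually_at
  proof (rule exI[of _ "\<delta> / 2"], intro conjI ballI impI)
    show "\<delta> / 2 > 0"
      using \<delta> by simp
    fix p :: "complex \<times> complex"
    assume "p \<noteq> (0, 0) \<and> dist p (0, 0) < \<delta> / 2"
    moreover obtain z w where p: "p = (z, w)"
      by (cases p)
    ultimately have "norm z < \<delta> / 2" "norm w < \<delta> / 2"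
      using dist_fst_le[of p "(0, 0)"] dist_snd_le[of p "(0, 0)"] by auto
    moreover have "norm z < \<delta>"
      using \<open>norm z < \<delta> / 2\<close> norm_ge_zero[of z] by linarith
    ultimately show "case p of (z, w) \<Rightarrow> z \<noteq> 0 \<and> w \<noteq> 0 \<and> z + w \<noteq> 0 \<longrightarrow>
        flow w (flow z (x, y)) = flow (z + w) (x, y)"
      using flow_composition[OF D0 Q0 r(2) \<rho>(1) \<rho>(3) \<rho>(2) near] near_D0 by (auto simp: p)
  qed
qed

lemma algebraic_on_U: "algebraic_on S U"
proof -
  obtain a b where ab: "hom_poly2 a P" "hom_poly2 b Q" "a = b + N"
    using hom_rat_fun_degrees[OF W_hom] .
  define Y T :: "complex poly poly poly" where "Y = [:[:0, 1:]:]" and "T = [:0, 1:]"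
  define P' Q' where "P' = subst_xy P ((Y + 1) * T) Y" and "Q' = subst_xy Q ((Y + 1) * T) Y"
  define R where "R = (Y + 1) * [:Q:] * Q' * (P' * [:Q:] - (Y + 1) ^ N * [:P:] * Q')"
  have eval_R: "eval3 R x y t = (y + 1) * eval2 Q x y * eval2 Q ((y + 1) * t) y *
      (eval2 P ((y + 1) * t) y * eval2 Q x y - (y + 1) ^ N * eval2 P x y * eval2 Q ((y + 1) * t) y)"
    for x y t
    by (simp add: R_def P'_def Q'_def eval3_subst_xy Y_def T_def mult.commute)
  have "eval3 R x y (U x y) = 0" if xy: "(x, y) \<in> S" for x y
  proof (cases "y + 1 = 0 \<or> eval2 Q x y = 0 \<or> eval2 Q ((y + 1) * U x y) y = 0")
    case True
    then show ?thesis
      unfolding eval_R by auto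
  next
    case False
    define u v where "u = U x y" and "v = y / (y + 1)"
    have y: "y = (y + 1) * v"
      using False by (simp add: v_def)
    have Pu: "eval2 P ((y + 1) * u) y = (y + 1) ^ a * eval2 P u v"
      by (subst y) (rule eval2_scale[OF ab(1)])
    have Qu: "eval2 Q ((y + 1) * u) y = (y + 1) ^ b * eval2 Q u v"
      by (subst y) (rule eval2_scale[OF ab(2)])
    have "eval2 Q u v \<noteq> 0"
      using False Qu by (auto simp: u_def)
    then have "ratW P Q u v = ratW P Q x y"
      using bspec[OF U_eq xy] False by (simp add: u_def v_def)
    then have "eval2 P u v * eval2 Q x y = eval2 P x y * eval2 Q u v"
      using \<open>eval2 Q u v \<noteq> 0\<close> False by (simp add: ratW_def field_simps)
    then have "eval2 P ((y + 1) * u) y * eval2 Q x y - (y + 1) ^ N * eval2 P x y * eval2 Q ((y + 1) * u) y = 0"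
      unfolding Pu Qu ab(3) by (simp add: power_add algebra_simps)
    then show ?thesis
      unfolding eval_R u_def by simp
  qed
  moreover have "R \<noteq> 0"
  proof -
    have "(2::nat) ^ N \<noteq> 1"
      using N_pos by simp
    then have "(2::complex) ^ N \<noteq> 1"
      by (metis of_nat_1 of_nat_eq_iff of_nat_numeral of_nat_power)
    then have "eval2 (([:0, 1:] + 1) ^ N - 1) 0 1 \<noteq> 0"
      by simp
    then have "([:0, 1:] + 1) ^ N - 1 \<noteq> (0 :: complex poly poly)"
      by (metis eval2_0)
    moreover have "eval2 ([:0, 1:] + 1) 0 0 \<noteq> 0"
      by simp
    then have "[:0, 1:] + 1 \<noteq> (0 :: complex poly poly)"
      by (metis eval2_0)
    ultimately have "P * Q * ([:0, 1:] + 1) * (([:0, 1:] + 1) ^ N - 1) \<noteq> 0"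
      using P_nonzero Q_nonzero by simp
    then obtain x0 y0 where "eval2 (P * Q * ([:0, 1:] + 1) * (([:0, 1:] + 1) ^ N - 1)) x0 y0 \<noteq> 0"
      using eval2_nonzero_in_open[of _ UNIV] by blast
    then have nz: "eval2 P x0 y0 \<noteq> 0" "eval2 Q x0 y0 \<noteq> 0" "y0 + 1 \<noteq> 0" "(y0 + 1) ^ N \<noteq> 1"
      by (auto simp: add.commute)
    have "eval3 R x0 y0 (x0 / (y0 + 1)) = (y0 + 1) * eval2 Q x0 y0 ^ 2 *
        (eval2 P x0 y0 * eval2 Q x0 y0 * (1 - (y0 + 1) ^ N))"
    proof -
      have "(y0 + 1) * (x0 / (y0 + 1)) = x0"
        using nz(3) by simp
      then show ?thesis
        unfolding eval_R by (simp add: algebra_simps power2_eq_square)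
    qed
    also have "\<dots> \<noteq> 0"
      using nz by simp
    finally show ?thesis
      by auto
  qed
  ultimately show ?thesis
    unfolding algebraic_on_def by blast
qed

lemma ratW_slope: "y \<noteq> 0 \<Longrightarrow> ratW P Q (x / y) 1 = ratW P Q x y / y ^ N"
  using ratW_scale[OF W_hom, of "1 / y" x y] by (simp add: power_one_over)

lemma eval2_Q_slope_eq_0_iff: "y \<noteq> 0 \<Longrightarrow> eval2 Q (x / y) 1 = 0 \<longleftrightarrow> eval2 Q x y = 0"
  using eval2_Q_scale_eq_0_iff[of "1 / y" x y] by simp

lemma vf1_eq:
  assumes "(x, y) \<in> D0" "eval2 Q x y \<noteq> 0" "ratWx P Q x y \<noteq> 0"
  shows "vf1 U x y = of_nat N * y * ratW P Q x y / ratWx P Q x y - x * y"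
  unfolding vf1_def by (rule tendsto_Lim[OF trivial_limit_at first_component_quotient_tendsto[OF assms]])

text \<open>The last condition lets a single branch of \<open>hom_root\<close> serve on the whole ball.\<close>
lemma ball_for_root_branch:
  obtains x0 y0 \<epsilon> where "ball (x0, y0) \<epsilon> \<subseteq> D0" "\<epsilon> > 0" "ratW P Q (x0 / y0) 1 \<noteq> 0"
    "\<And>x y. (x, y) \<in> ball (x0, y0) \<epsilon> \<Longrightarrow> y \<noteq> 0 \<and> eval2 P x y \<noteq> 0 \<and> eval2 Q x y \<noteq> 0 \<and>
       ratWx P Q x y \<noteq> 0 \<and> norm (ratW P Q (x / y) 1 / ratW P Q (x0 / y0) 1 - 1) < 1"
proof -
  define G where "G = [:0, 1:] * P * Q * (dx2 P * Q - P * dx2 Q)"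
  have "G \<noteq> 0"
    using P_nonzero Q_nonzero dx_numerator_nonzero by (simp add: G_def)
  then obtain x0 y0 where xy0: "(x0, y0) \<in> D0" "eval2 G x0 y0 \<noteq> 0"
    using eval2_nonzero_in_open D0_open D0_ne by blast
  then have nz0: "y0 \<noteq> 0" "eval2 P x0 y0 \<noteq> 0" "eval2 Q x0 y0 \<noteq> 0"
    by (auto simp: G_def)
  have "open (D0 \<inter> {p. eval2 G (fst p) (snd p) \<noteq> 0})"
    by (intro open_Int D0_open open_Collect_neq continuous_intros)
  moreover have "(x0, y0) \<in> D0 \<inter> {p. eval2 G (fst p) (snd p) \<noteq> 0}"
    using xy0 by simp
  ultimately obtain \<epsilon>1 where \<epsilon>1: "\<epsilon>1 > 0" "ball (x0, y0) \<epsilon>1 \<subseteq> D0 \<inter> {p. eval2 G (fst p) (snd p) \<noteq> 0}"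
    using open_contains_ball by blast
  define W0 where "W0 = ratW P Q (x0 / y0) 1"
  have W0: "W0 \<noteq> 0"
    using nz0 unfolding W0_def ratW_slope[OF nz0(1)] by (simp add: ratW_def)
  define F where "F p = ratW P Q (fst p / snd p) 1" for p :: "complex \<times> complex"
  have "isCont F (x0, y0)"
    using nz0 eval2_Q_slope_eq_0_iff[of y0 x0]
    unfolding F_def ratW_def by (intro continuous_intros) auto
  then obtain \<epsilon>2 where \<epsilon>2: "\<epsilon>2 > 0" "\<And>p. dist p (x0, y0) < \<epsilon>2 \<Longrightarrow> dist (F p) W0 < norm W0"
    using W0 unfolding continuous_at_eps_delta F_def W0_def by (metis fst_conv snd_conv zero_less_norm_iff)
  show thesis
  proof (rule that[of x0 y0 "min \<epsilon>1 \<epsilon>2"])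
    show "ball (x0, y0) (min \<epsilon>1 \<epsilon>2) \<subseteq> D0"
      using \<epsilon>1 by auto
    show "min \<epsilon>1 \<epsilon>2 > 0" "ratW P Q (x0 / y0) 1 \<noteq> 0"
      using \<epsilon>1 \<epsilon>2 W0 by (simp_all add: W0_def)
    fix x y
    assume "(x, y) \<in> ball (x0, y0) (min \<epsilon>1 \<epsilon>2)"
    then have xy: "(x, y) \<in> ball (x0, y0) \<epsilon>1" "dist (x, y) (x0, y0) < \<epsilon>2"
      by (auto simp: dist_commute)
    then have "y \<noteq> 0 \<and> eval2 P x y \<noteq> 0 \<and> eval2 Q x y \<noteq> 0 \<and> ratWx P Q x y \<noteq> 0"
      using \<epsilon>1(2) by (auto simp: G_def ratWx_altdef)
    moreover have "norm (ratW P Q (x / y) 1 / W0 - 1) < 1"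
    proof -
      have "ratW P Q (x / y) 1 / W0 - 1 = (ratW P Q (x / y) 1 - W0) / W0"
        using W0 by (simp add: field_simps)
      then show ?thesis
        using \<epsilon>2(2)[OF xy(2)] W0 by (simp add: F_def dist_norm norm_divide divide_less_eq)
    qed
    ultimately show "y \<noteq> 0 \<and> eval2 P x y \<noteq> 0 \<and> eval2 Q x y \<noteq> 0 \<and> ratWx P Q x y \<noteq> 0 \<and>
        norm (ratW P Q (x / y) 1 / ratW P Q (x0 / y0) 1 - 1) < 1"
      by (simp add: W0_def)
  qed
qed

lemma level_on_of_root_branch:
  assumes D: "open D" "D \<noteq> {}" "D \<subseteq> D0" and w0: "w0 \<noteq> 0"
    and good: "\<And>x y. (x, y) \<in> D \<Longrightarrow> y \<noteq> 0 \<and> eval2 P x y \<noteq> 0 \<and> eval2 Q x y \<noteq> 0 \<and>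
       ratWx P Q x y \<noteq> 0 \<and> norm (ratW P Q (x / y) 1 / w0 - 1) < 1"
  shows "level_on D U (\<lambda>x y. y / (y + 1)) N"
proof -
  define W1 where "W1 = hom_root N (ratW P Q) w0"
  have W0_nz: "ratW P Q x y \<noteq> 0" if "(x, y) \<in> D" for x y
    using good[OF that] by (simp add: ratW_def)
  have W1_power: "W1 x y ^ N = ratW P Q x y" if "(x, y) \<in> D" for x y
  proof -
    have "ratW P Q (x / y) 1 \<noteq> 0"
      using good[OF that] W0_nz[OF that] by (simp add: ratW_slope)
    then show ?thesis
      using hom_root_power[OF N_pos w0] good[OF that] by (simp add: W1_def ratW_slope)
  qed
  have W1_nz: "W1 x y \<noteq> 0" if "(x, y) \<in> D" for x y
    using good[OF that] by (simp add: W1_def hom_root_nonzero)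
  have vf1: "vf1 U x y = of_nat N * y * ratW P Q x y / ratWx P Q x y - x * y" if "(x, y) \<in> D" for x y
    using good[OF that] D(3) that by (intro vf1_eq) auto
  have W1_pde: "\<exists>d. ((\<lambda>t. W1 t y) has_field_derivative d) (at x) \<and>
      W1 x y * vf2 (\<lambda>x y. y / (y + 1)) x y +
        d * (y * vf1 U x y - x * vf2 (\<lambda>x y. y / (y + 1)) x y) = 0"
    if xy: "(x, y) \<in> D" for x y
  proof -
    note g = good[OF xy]
    have "eval2 Q (x / y) 1 \<noteq> 0"
      using g eval2_Q_slope_eq_0_iff by blast
    moreover have "ratW P Q (x / y) 1 / w0 \<notin> \<real>\<^sub>\<le>\<^sub>0"
      using g by (intro not_nonpos_Reals_if_near_1) simp
    ultimately obtain d where d: "((\<lambda>t. W1 t y) has_field_derivative d) (at x)"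
      using hom_root_has_field_derivative[where W = "ratW P Q" and N = N, OF _ ratW_has_field_derivative] g
      unfolding W1_def by blast
    have "open ((\<lambda>t. (t, y)) -` D)"
      using D(1) by (intro continuous_open_vimage) (auto intro: continuous_intros)
    then have "eventually (\<lambda>t. W1 t y ^ N = ratW P Q t y) (nhds x)"
      using xy W1_power by (auto intro: eventually_nhds_in_open[THEN eventually_mono])
    then have "ratWx P Q x y = of_nat N * (d * W1 x y ^ (N - 1))"
      using has_field_derivative_power_eq[OF d ratW_has_field_derivative] g by blast
    then show ?thesis
      using level_equation_of_root[OF N_pos W1_nz[OF xy] W1_power[OF xy]] g d
      by (auto simp: vf1[OF xy] vf2_flow_v)
  qed
  have "\<forall>\<^sub>F t in nhds 1. t \<noteq> (0::complex)"
    by (rule t1_space_nhds) simp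
  then have W1_hom: "\<forall>\<^sub>F t in nhds 1. W1 (t * x) (t * y) = t * W1 x y" for x y
    by eventually_elim (simp add: W1_def hom_root_scale)
  have "x * vf2 (\<lambda>x y. y / (y + 1)) x y - y * vf1 U x y \<noteq> 0" if "(x, y) \<in> D" for x y
  proof -
    have "x * vf2 (\<lambda>x y. y / (y + 1)) x y - y * vf1 U x y
        = - (of_nat N * y ^ 2 * ratW P Q x y / ratWx P Q x y)"
      by (simp add: vf1[OF that] vf2_flow_v algebra_simps power2_eq_square)
    then show ?thesis
      using good[OF that] W0_nz[OF that] N_pos by simp
  qed
  moreover have "level_solution D (vf1 U) (vf2 (\<lambda>x y. y / (y + 1))) W1"
    unfolding level_solution_def using W1_nz W1_pde W1_hom by blast
  moreover have "rational_on D (\<lambda>x y. W1 x y ^ N)"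
    unfolding rational_on_def
    by (rule exI[of _ P], rule exI[of _ Q]) (use Q_nonzero W1_power in \<open>auto simp: ratW_def\<close>)
  moreover have "\<not> rational_on D (\<lambda>x y. W1 x y ^ M)" if "0 < M" "M < N" for M
    using lower_powers_not_rational[OF W_hom W_not_power D(1,2) _ that] W1_nz W1_power by blast
  ultimately show ?thesis
    unfolding level_on_def using N_pos by blast
qed

end

theorem proposition3:
  fixes N :: nat and P Q :: "complex poly poly"
    and U :: "complex \<Rightarrow> complex \<Rightarrow> complex"
    and S D0 :: "(complex \<times> complex) set"
  assumes N_pos: "N > 0"
    and W_hom: "hom_rat_fun (int N) P Q"
    and W_not_power: "\<not> is_hom_power P Q"
    and S_open: "open S"
    and U_cont: "continuous_on S (\<lambda>(x, y). U x y)"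
    and U_eq: "\<forall>(x, y)\<in>S. y + 1 \<noteq> 0 \<and> eval2 Q x y \<noteq> 0 \<and> eval2 Q (U x y) (y / (y + 1)) \<noteq> 0
                 \<longrightarrow> ratW P Q (U x y) (y / (y + 1)) = ratW P Q x y"
    and D0_open: "open D0" and D0_ne: "D0 \<noteq> {}"
    and cone: "\<exists>r>0. \<forall>(x, y)\<in>D0. \<forall>z. z \<noteq> 0 \<and> norm z < r \<longrightarrow> (z * x, z * y) \<in> S"
    and U_bdry: "\<forall>(x, y)\<in>D0. ((\<lambda>z. U (z * x) (z * y) / z) \<longlongrightarrow> x) (at 0)"
  shows "algebraic_on S U \<and> algebraic_on S (\<lambda>x y. y / (y + 1)) \<and>
    (\<exists>D. connected D \<and> D \<subseteq> D0 \<and>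
       projective_flow_on D U (\<lambda>x y. y / (y + 1)) \<and>
       (\<forall>(x, y)\<in>D. eval2 Q x y \<noteq> 0 \<and> ratWx P Q x y \<noteq> 0 \<and>
          ((\<lambda>z. (U (z * x) (z * y) / z - x) / z)
             \<longlongrightarrow> of_nat N * y * ratW P Q x y / ratWx P Q x y - x * y) (at 0) \<and>
          ((\<lambda>z. ((z * y) / (z * y + 1) / z - y) / z) \<longlongrightarrow> - (y ^ 2)) (at 0)) \<and>
       level_on D U (\<lambda>x y. y / (y + 1)) N)"
proof -
  interpret implicit_flow N P Q U S D0
    using N_pos W_hom W_not_power U_cont U_eq D0_open D0_ne cone U_bdry by unfold_locales
  obtain x0 y0 \<epsilon> where \<epsilon>: "ball (x0, y0) \<epsilon> \<subseteq> D0" "\<epsilon> > 0" "ratW P Q (x0 / y0) 1 \<noteq> 0"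
    and good: "\<And>x y. (x, y) \<in> ball (x0, y0) \<epsilon> \<Longrightarrow> y \<noteq> 0 \<and> eval2 P x y \<noteq> 0 \<and> eval2 Q x y \<noteq> 0 \<and>
       ratWx P Q x y \<noteq> 0 \<and> norm (ratW P Q (x / y) 1 / ratW P Q (x0 / y0) 1 - 1) < 1"
    by (rule ball_for_root_branch) blast
  define D where "D = ball (x0, y0) \<epsilon>"
  have D: "open D" "D \<noteq> {}" "connected D" "D \<subseteq> D0"
    using \<epsilon> by (auto simp: D_def)
  have pt: "(x, y) \<in> D0" "eval2 Q x y \<noteq> 0" "ratWx P Q x y \<noteq> 0" if "(x, y) \<in> D" for x y
    using good[of x y] that D(4) by (auto simp: D_def)
  have "projective_flow_on D U (\<lambda>x y. y / (y + 1))"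
    unfolding projective_flow_on_def
    using D(1,2) U_bdry tendsto_flow_v eventually_flow_composition[OF pt] pt(1) by blast
  moreover have "\<forall>(x, y)\<in>D. eval2 Q x y \<noteq> 0 \<and> ratWx P Q x y \<noteq> 0 \<and>
      ((\<lambda>z. (U (z * x) (z * y) / z - x) / z)
         \<longlongrightarrow> of_nat N * y * ratW P Q x y / ratWx P Q x y - x * y) (at 0) \<and>
      ((\<lambda>z. ((z * y) / (z * y + 1) / z - y) / z) \<longlongrightarrow> - (y ^ 2)) (at 0)"
    using pt first_component_quotient_tendsto[OF pt] tendsto_flow_v_quotient by blast
  moreover have "level_on D U (\<lambda>x y. y / (y + 1)) N"
    using level_on_of_root_branch[OF D(1,2,4) \<epsilon>(3)] good by (simp add: D_def)
  ultimately show ?thesis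
    using algebraic_on_U algebraic_on_flow_v D(3,4) by blast
qed

end
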